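(* Let $n\in\mathbb{N}$ and $\omega\in H^2(\mathbb{Z}^2,\mathbb{T})\cong\mathbb{T}$. Then there exists a projective representation $u:\mathbb{Z}^2\to P\mathcal{U}(M_{n^\infty})$ with $\mathrm{ob}(u)=\omega$ if and only if $\omega^{n^l}=1$ for some $l\in\mathbb{N}$.
   Context: $M_{n^\infty}$ is the UHF algebra of infinite type $n^\infty$, $\mathcal{U}(A)$ the unitary group of a unital C$^*$-algebra $A$ and $P\mathcal{U}(A)=\mathcal{U}(A)/\mathbb{T}$. A projective representation of a discrete group $G$ on $A$ is a group homomorphism $u:G\to P\mathcal{U}(A)$, and $\mathrm{ob}(u)\in H^2(G,\mathbb{T})$ is the class of $\tilde u_g\tilde u_h\tilde u_{gh}^*$ for any lift $\tilde u$. The identification $H^2(\mathbb{Z}^2,\mathbb{T})\cong\mathbb{T}$ sends the class of a cocycle $\omega$ to the commutator scalar $\omega(a,b)\overline{\omega(b,a)}$ of the two standard generators $a,b$. *)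

theory Defs
  imports Complex_Main
begin

text \<open>Square complex matrices of size N are represented by functions
  nat => nat => complex, of which only the entries with indices < N matter.\<close>

type_synonym cmat = "nat \<Rightarrow> nat \<Rightarrow> complex"

definition mmul :: "nat \<Rightarrow> cmat \<Rightarrow> cmat \<Rightarrow> cmat" where
  "mmul N a b = (\<lambda>i j. \<Sum>l<N. a i l * b l j)"

definition madj :: "cmat \<Rightarrow> cmat" where
  "madj a = (\<lambda>i j. cnj (a j i))"

definition mone :: cmat where
  "mone = (\<lambda>i j. if i = j then 1 else 0)"

definition mdiff :: "cmat \<Rightarrow> cmat \<Rightarrow> cmat" where
  "mdiff a b = (\<lambda>i j. a i j - b i j)"

definition mscale :: "complex \<Rightarrow> cmat \<Rightarrow> cmat" where
  "mscale c a = (\<lambda>i j. c * a i j)"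

definition opnorm :: "nat \<Rightarrow> cmat \<Rightarrow> real" where
  "opnorm N a = Sup {sqrt (\<Sum>i<N. (cmod (\<Sum>j<N. a i j * v j))\<^sup>2) | v.
                      (\<Sum>j<N. (cmod (v j))\<^sup>2) \<le> 1}"

text \<open>The unital connecting *-homomorphism M_{n^j} -> M_{n^k} (j <= k), a |-> a (x) 1_{n^(k-j)}.\<close>
definition amp :: "nat \<Rightarrow> nat \<Rightarrow> nat \<Rightarrow> cmat \<Rightarrow> cmat" where
  "amp n j k a = (\<lambda>i i'. let m = n ^ (k - j) in
      if i mod m = i' mod m then a (i div m) (i' div m) else 0)"

text \<open>Elements of M_{n^infinity} (the C*-inductive limit of the M_{n^k}) are represented by
  sequences x with x k in M_{n^k} which are Cauchy for the C*-norm of the inductive limit;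
  two such sequences represent the same element iff their difference tends to 0 in norm.\<close>

definition uhf_elem :: "nat \<Rightarrow> (nat \<Rightarrow> cmat) \<Rightarrow> bool" where
  "uhf_elem n x \<longleftrightarrow> (\<forall>\<epsilon>>0. \<exists>K. \<forall>j\<ge>K. \<forall>k\<ge>j.
       opnorm (n ^ k) (mdiff (x k) (amp n j k (x j))) < \<epsilon>)"

definition uhf_eq :: "nat \<Rightarrow> (nat \<Rightarrow> cmat) \<Rightarrow> (nat \<Rightarrow> cmat) \<Rightarrow> bool" where
  "uhf_eq n x y \<longleftrightarrow> ((\<lambda>k. opnorm (n ^ k) (mdiff (x k) (y k))) \<longlonglongrightarrow> 0)"

definition uhf_mul :: "nat \<Rightarrow> (nat \<Rightarrow> cmat) \<Rightarrow> (nat \<Rightarrow> cmat) \<Rightarrow> (nat \<Rightarrow> cmat)" where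
  "uhf_mul n x y = (\<lambda>k. mmul (n ^ k) (x k) (y k))"

definition uhf_adj :: "(nat \<Rightarrow> cmat) \<Rightarrow> (nat \<Rightarrow> cmat)" where
  "uhf_adj x = (\<lambda>k. madj (x k))"

definition uhf_one :: "nat \<Rightarrow> cmat" where
  "uhf_one = (\<lambda>k. mone)"

definition uhf_scale :: "complex \<Rightarrow> (nat \<Rightarrow> cmat) \<Rightarrow> (nat \<Rightarrow> cmat)" where
  "uhf_scale c x = (\<lambda>k. mscale c (x k))"

definition uhf_unitary :: "nat \<Rightarrow> (nat \<Rightarrow> cmat) \<Rightarrow> bool" where
  "uhf_unitary n x \<longleftrightarrow> uhf_elem n x \<and>
     uhf_eq n (uhf_mul n (uhf_adj x) x) uhf_one \<and> uhf_eq n (uhf_mul n x (uhf_adj x)) uhf_one"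

type_synonym z2 = "int \<times> int"

definition z2add :: "z2 \<Rightarrow> z2 \<Rightarrow> z2" where
  "z2add g h = (fst g + fst h, snd g + snd h)"

text \<open>A projective representation u : Z^2 -> PU(M_{n^infinity}) is given through a lift
  ut : Z^2 -> U(M_{n^infinity}); u being a homomorphism means exactly that
  ut g * ut h = c g h * ut (g+h) with scalars c g h in T.  The 2-cocycle c represents ob(u).\<close>
definition proj_rep_lift :: "nat \<Rightarrow> (z2 \<Rightarrow> nat \<Rightarrow> cmat) \<Rightarrow> (z2 \<Rightarrow> z2 \<Rightarrow> complex) \<Rightarrow> bool" where
  "proj_rep_lift n ut c \<longleftrightarrow>
     (\<forall>g. uhf_unitary n (ut g)) \<and>
     (\<forall>g h. cmod (c g h) = 1 \<and>
            uhf_eq n (uhf_mul n (ut g) (ut h)) (uhf_scale (c g h) (ut (z2add g h))))"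

text \<open>Image of the class of the cocycle c under H^2(Z^2,T) = T (commutator scalar of the
  standard generators a = (1,0), b = (0,1)).\<close>
definition ob_scalar :: "(z2 \<Rightarrow> z2 \<Rightarrow> complex) \<Rightarrow> complex" where
  "ob_scalar c = c (1, 0) (0, 1) * cnj (c (0, 1) (1, 0))"

end

theory Submission
  imports Defs "HOL-Analysis.Analysis" "Jordan_Normal_Form.Schur_Decomposition"
begin

(* Let X, Y be lifts of the two generators, with obstruction \<omega>. At level k of the inductive
  limit (matrices of size N = n^k) the defect D = 1 - cnj \<omega> X Y X* Y* tends to 0. Since
  det (1 - D) = cnj \<omega>^N |det X|^2 |det Y|^2, the series log_det D = - \<Sum> tr (D^p) / p is a
  logarithm of det (1 - D) with phase cnj \<omega>^N, and |log_det D| \<le> 2 N \<parallel>D\<parallel>. Its imaginary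
  part is therefore constant along paths of small defects. Joining X_k, Y_k by segments to the
  amplifications of X_j, Y_j, and using that log_det is multiplied by n^(k-j) under
  amplification, gives n^(k-j) |Im log_det D_j| \<le> 2 n^k \<parallel>D_k\<parallel>. Letting k tend to infinity,
  Im log_det D_j = 0, so det (1 - D_j) > 0 and cnj \<omega>^(n^j) = 1.
  Conversely, if \<omega>^L = 1 with L = n^l, the clock and shift matrices of size L form an honest
  projective representation with obstruction \<omega> at level l, which amplifies to all higher levels. *)

section \<open>The operator norm of square matrices\<close>

definition vec_norm :: "nat \<Rightarrow> (nat \<Rightarrow> complex) \<Rightarrow> real" where
  "vec_norm N v = L2_set (\<lambda>i. cmod (v i)) {..<N}"

definition mat_vec :: "nat \<Rightarrow> cmat \<Rightarrow> (nat \<Rightarrow> complex) \<Rightarrow> (nat \<Rightarrow> complex)" where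
  "mat_vec N a v = (\<lambda>i. \<Sum>j<N. a i j * v j)"

lemma opnorm_eq_Sup: "opnorm N a = Sup {vec_norm N (mat_vec N a v) | v. vec_norm N v \<le> 1}"
  unfolding opnorm_def vec_norm_def mat_vec_def L2_set_def by simp

lemma vec_norm_nonneg: "vec_norm N v \<ge> 0"
  unfolding vec_norm_def by (simp add: L2_set_nonneg)

lemma vec_norm_zero [simp]: "vec_norm N (\<lambda>_. 0) = 0"
  unfolding vec_norm_def L2_set_def by simp

lemma norm_le_vec_norm: "j < N \<Longrightarrow> cmod (v j) \<le> vec_norm N v"
  unfolding vec_norm_def by (rule member_le_L2_set) auto

lemma vec_norm_le_sum: "vec_norm N v \<le> (\<Sum>i<N. cmod (v i))"
  unfolding vec_norm_def using L2_set_le_sum[of "{..<N}" "\<lambda>i. cmod (v i)"] by simp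

lemma vec_norm_scale: "vec_norm N (\<lambda>i. c * v i) = cmod c * vec_norm N v"
  unfolding vec_norm_def using L2_set_right_distrib[of "cmod c" "\<lambda>i. cmod (v i)" "{..<N}"]
  by (simp add: norm_mult)

lemma vec_norm_eq_0D: "vec_norm N v = 0 \<Longrightarrow> j < N \<Longrightarrow> v j = 0"
  using norm_le_vec_norm[of j N v] by simp

lemma vec_norm_triangle: "vec_norm N (\<lambda>i. x i + y i) \<le> vec_norm N x + vec_norm N y"
proof -
  have "vec_norm N (\<lambda>i. x i + y i) \<le> L2_set (\<lambda>i. cmod (x i) + cmod (y i)) {..<N}"
    unfolding vec_norm_def by (rule L2_set_mono) (auto simp: norm_triangle_ineq)
  also have "\<dots> \<le> vec_norm N x + vec_norm N y"
    unfolding vec_norm_def by (rule L2_set_triangle_ineq)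
  finally show ?thesis .
qed

lemma vec_norm_cong: "(\<And>i. i < N \<Longrightarrow> x i = y i) \<Longrightarrow> vec_norm N x = vec_norm N y"
  unfolding vec_norm_def by (intro L2_set_cong) auto

lemma mat_vec_scale: "mat_vec N a (\<lambda>i. c * v i) = (\<lambda>i. c * mat_vec N a v i)"
  unfolding mat_vec_def by (simp add: sum_distrib_left mult.left_commute)

lemma mat_vec_cong: "(\<And>j. j < N \<Longrightarrow> v j = w j) \<Longrightarrow> mat_vec N a v = mat_vec N a w"
  unfolding mat_vec_def by auto

lemma mat_vec_mmul: "mat_vec N (mmul N a b) v = mat_vec N a (mat_vec N b v)"
proof
  fix i
  have "mat_vec N (mmul N a b) v i = (\<Sum>j<N. \<Sum>l<N. a i l * b l j * v j)"
    unfolding mat_vec_def mmul_def by (simp add: sum_distrib_right)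
  also have "\<dots> = (\<Sum>l<N. \<Sum>j<N. a i l * b l j * v j)" by (rule sum.swap)
  also have "\<dots> = mat_vec N a (mat_vec N b v) i"
    unfolding mat_vec_def by (simp add: sum_distrib_left mult.assoc)
  finally show "mat_vec N (mmul N a b) v i = mat_vec N a (mat_vec N b v) i" .
qed

lemma vec_norm_mat_vec_le_entry_sum:
  assumes "vec_norm N v \<le> 1"
  shows "vec_norm N (mat_vec N a v) \<le> (\<Sum>i<N. \<Sum>j<N. cmod (a i j))"
proof -
  have "vec_norm N (mat_vec N a v) \<le> (\<Sum>i<N. cmod (mat_vec N a v i))" by (rule vec_norm_le_sum)
  also have "\<dots> \<le> (\<Sum>i<N. \<Sum>j<N. cmod (a i j * v j))"
    unfolding mat_vec_def by (intro sum_mono norm_sum)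
  also have "\<dots> \<le> (\<Sum>i<N. \<Sum>j<N. cmod (a i j))"
  proof -
    have "cmod (v j) \<le> 1" if "j < N" for j using norm_le_vec_norm[OF that, of v] assms by linarith
    then show ?thesis by (intro sum_mono) (simp add: norm_mult mult_left_le)
  qed
  finally show ?thesis .
qed

lemma opnorm_upper: "vec_norm N v \<le> 1 \<Longrightarrow> vec_norm N (mat_vec N a v) \<le> opnorm N a"
  unfolding opnorm_eq_Sup
  by (rule cSup_upper) (auto simp: bdd_above_def intro: vec_norm_mat_vec_le_entry_sum)

lemma opnorm_nonneg: "opnorm N a \<ge> 0"
  using opnorm_upper[of N "\<lambda>_. 0" a] vec_norm_nonneg[of N "mat_vec N a (\<lambda>_. 0)"] by simp

lemma opnorm_least:
  assumes "\<And>v. vec_norm N v \<le> 1 \<Longrightarrow> vec_norm N (mat_vec N a v) \<le> c"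
  shows "opnorm N a \<le> c"
proof -
  have "{vec_norm N (mat_vec N a v) | v. vec_norm N v \<le> 1} \<noteq> {}"
    using vec_norm_zero[of N] by (metis (mono_tags, lifting) empty_Collect_eq zero_le_one)
  then show ?thesis unfolding opnorm_eq_Sup by (rule cSup_least) (use assms in blast)
qed

lemma vec_norm_mat_vec_le: "vec_norm N (mat_vec N a v) \<le> opnorm N a * vec_norm N v"
proof (cases "vec_norm N v = 0")
  case True
  then have "mat_vec N a v = mat_vec N a (\<lambda>_. 0)" by (intro mat_vec_cong) (auto dest: vec_norm_eq_0D)
  then show ?thesis using True by (simp add: mat_vec_def)
next
  case False
  define r where "r = vec_norm N v"
  have r: "r > 0" using False vec_norm_nonneg[of N v] unfolding r_def by auto
  define w where "w = (\<lambda>i. complex_of_real (1/r) * v i)"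
  have "vec_norm N w = 1" unfolding w_def vec_norm_scale using r by (simp add: r_def norm_divide)
  then have "vec_norm N (mat_vec N a w) \<le> opnorm N a" by (intro opnorm_upper) simp
  moreover have "vec_norm N (mat_vec N a w) = (1/r) * vec_norm N (mat_vec N a v)"
    unfolding w_def mat_vec_scale vec_norm_scale using r by (simp add: norm_divide)
  ultimately show ?thesis using r by (simp add: r_def field_simps)
qed

lemma opnorm_leI:
  assumes "c \<ge> 0" "\<And>v. vec_norm N (mat_vec N a v) \<le> c * vec_norm N v"
  shows "opnorm N a \<le> c"
  using assms by (intro opnorm_least) (meson dual_order.trans mult_left_le)

definition block_eq :: "nat \<Rightarrow> cmat \<Rightarrow> cmat \<Rightarrow> bool" where
  "block_eq N a b \<longleftrightarrow> (\<forall>i<N. \<forall>j<N. a i j = b i j)"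

lemma opnorm_cong: "block_eq N a b \<Longrightarrow> opnorm N a = opnorm N b"
  unfolding opnorm_eq_Sup block_eq_def mat_vec_def by (simp cong: vec_norm_cong)

lemma opnorm_zero: "(\<And>i j. i < N \<Longrightarrow> j < N \<Longrightarrow> a i j = 0) \<Longrightarrow> opnorm N a = 0"
  using opnorm_cong[of N a "\<lambda>_ _. 0"] opnorm_least[of N "\<lambda>_ _. 0" 0] opnorm_nonneg[of N "\<lambda>_ _. 0"]
  by (simp add: block_eq_def mat_vec_def)

lemma opnorm_add_le:
  assumes "\<And>i j. i < N \<Longrightarrow> j < N \<Longrightarrow> a i j = b i j + c i j"
  shows "opnorm N a \<le> opnorm N b + opnorm N c"
proof (rule opnorm_leI)
  show "0 \<le> opnorm N b + opnorm N c" using opnorm_nonneg[of N b] opnorm_nonneg[of N c] by simp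
  fix v
  have "vec_norm N (mat_vec N a v) = vec_norm N (\<lambda>i. mat_vec N b v i + mat_vec N c v i)"
    using assms unfolding mat_vec_def by (intro vec_norm_cong) (auto simp: sum.distrib algebra_simps)
  also have "\<dots> \<le> vec_norm N (mat_vec N b v) + vec_norm N (mat_vec N c v)" by (rule vec_norm_triangle)
  also have "\<dots> \<le> (opnorm N b + opnorm N c) * vec_norm N v"
    using vec_norm_mat_vec_le[of N b v] vec_norm_mat_vec_le[of N c v] by (simp add: algebra_simps)
  finally show "vec_norm N (mat_vec N a v) \<le> (opnorm N b + opnorm N c) * vec_norm N v" .
qed

lemma opnorm_scale_le:
  assumes "\<And>i j. i < N \<Longrightarrow> j < N \<Longrightarrow> a i j = s * b i j"
  shows "opnorm N a \<le> cmod s * opnorm N b"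
proof (rule opnorm_leI)
  show "0 \<le> cmod s * opnorm N b" using opnorm_nonneg[of N b] by simp
  fix v
  have "vec_norm N (mat_vec N a v) = cmod s * vec_norm N (mat_vec N b v)"
    using assms unfolding vec_norm_scale[symmetric] mat_vec_def
    by (intro vec_norm_cong) (auto simp: sum_distrib_left algebra_simps)
  also have "\<dots> \<le> cmod s * (opnorm N b * vec_norm N v)"
    using vec_norm_mat_vec_le[of N b v] by (simp add: mult_left_mono)
  finally show "vec_norm N (mat_vec N a v) \<le> cmod s * opnorm N b * vec_norm N v"
    by (simp add: algebra_simps)
qed

lemma opnorm_mmul_le: "opnorm N (mmul N a b) \<le> opnorm N a * opnorm N b"
proof (rule opnorm_leI)
  show "0 \<le> opnorm N a * opnorm N b" using opnorm_nonneg[of N b] opnorm_nonneg[of N a] by simp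
  fix v
  have "vec_norm N (mat_vec N (mmul N a b) v) \<le> opnorm N a * vec_norm N (mat_vec N b v)"
    unfolding mat_vec_mmul by (rule vec_norm_mat_vec_le)
  also have "\<dots> \<le> opnorm N a * (opnorm N b * vec_norm N v)"
    using vec_norm_mat_vec_le[of N b v] opnorm_nonneg[of N a] by (simp add: mult_left_mono)
  finally show "vec_norm N (mat_vec N (mmul N a b) v) \<le> opnorm N a * opnorm N b * vec_norm N v"
    by (simp add: algebra_simps)
qed

lemma opnorm_mone_le: "opnorm N mone \<le> 1"
proof (rule opnorm_leI)
  fix v
  have "mat_vec N mone v i = v i" if "i < N" for i
  proof -
    have "mat_vec N mone v i = (\<Sum>j<N. if i = j then v j else 0)"
      unfolding mat_vec_def mone_def by (rule sum.cong) auto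
    then show ?thesis using that by (simp add: sum.delta)
  qed
  then show "vec_norm N (mat_vec N mone v) \<le> 1 * vec_norm N v"
    by (simp cong: vec_norm_cong)
qed simp

lemma diag_entry_le_opnorm:
  assumes "i < N"
  shows "cmod (a i i) \<le> opnorm N a"
proof -
  define e where "e = (\<lambda>j. if j = i then (1::complex) else 0)"
  have "(\<Sum>j<N. (cmod (e j))\<^sup>2) = (\<Sum>j<N. if j = i then 1 else 0)"
    by (rule sum.cong) (auto simp: e_def)
  then have "vec_norm N e = 1" unfolding vec_norm_def L2_set_def using assms
    by (simp add: sum.delta')
  then have "vec_norm N (mat_vec N a e) \<le> opnorm N a" by (intro opnorm_upper) simp
  moreover have "mat_vec N a e i = a i i" unfolding mat_vec_def e_def using assms
    by (simp add: if_distrib sum.delta cong: if_cong)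
  ultimately show ?thesis using norm_le_vec_norm[OF assms, of "mat_vec N a e"] by simp
qed

definition mtrace :: "nat \<Rightarrow> cmat \<Rightarrow> complex" where
  "mtrace N a = (\<Sum>i<N. a i i)"

lemma norm_mtrace_le: "cmod (mtrace N a) \<le> real N * opnorm N a"
proof -
  have "cmod (mtrace N a) \<le> (\<Sum>i<N. cmod (a i i))" unfolding mtrace_def by (rule norm_sum)
  also have "\<dots> \<le> (\<Sum>i<N. opnorm N a)" by (rule sum_mono) (simp add: diag_entry_le_opnorm)
  finally show ?thesis by simp
qed

primrec mpow :: "nat \<Rightarrow> cmat \<Rightarrow> nat \<Rightarrow> cmat" where
  "mpow N a 0 = mone"
| "mpow N a (Suc m) = mmul N (mpow N a m) a"

lemma opnorm_mpow_le: "opnorm N (mpow N a m) \<le> opnorm N a ^ m"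
proof (induction m)
  case 0 then show ?case using opnorm_mone_le by simp
next
  case (Suc m)
  have "opnorm N (mpow N a (Suc m)) \<le> opnorm N (mpow N a m) * opnorm N a"
    using opnorm_mmul_le[of N "mpow N a m" a] by simp
  also have "\<dots> \<le> opnorm N a ^ m * opnorm N a"
    using Suc opnorm_nonneg[of N a] by (simp add: mult_right_mono)
  finally show ?case by (simp add: mult.commute)
qed

lemma sum_norm_square_mat_vec:
  "complex_of_real (\<Sum>i<N. (cmod (mat_vec N a v i))\<^sup>2)
     = (\<Sum>j<N. cnj (v j) * mat_vec N (madj a) (mat_vec N a v) j)"
proof -
  have "complex_of_real (\<Sum>i<N. (cmod (mat_vec N a v i))\<^sup>2)
      = (\<Sum>i<N. cnj (mat_vec N a v i) * mat_vec N a v i)"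
    unfolding of_real_sum by (intro sum.cong refl) (simp only: complex_norm_square mult.commute)
  also have "\<dots> = (\<Sum>i<N. \<Sum>j<N. cnj (a i j) * cnj (v j) * mat_vec N a v i)"
    unfolding mat_vec_def[of N a v] by (simp add: sum_distrib_right)
  also have "\<dots> = (\<Sum>j<N. \<Sum>i<N. cnj (a i j) * cnj (v j) * mat_vec N a v i)"
    by (rule sum.swap)
  also have "\<dots> = (\<Sum>j<N. cnj (v j) * mat_vec N (madj a) (mat_vec N a v) j)"
    by (simp add: mat_vec_def madj_def sum_distrib_left mult.assoc mult.left_commute)
  finally show ?thesis .
qed

lemma opnorm_square_le: "(opnorm N a)\<^sup>2 \<le> opnorm N (mmul N (madj a) a)"
proof -
  let ?c = "opnorm N (mmul N (madj a) a)"
  have c0: "?c \<ge> 0" by (rule opnorm_nonneg)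
  have "opnorm N a \<le> sqrt ?c"
  proof (rule opnorm_least)
    fix v assume v: "vec_norm N v \<le> 1"
    let ?w = "mat_vec N (madj a) (mat_vec N a v)"
    have s0: "(\<Sum>i<N. (cmod (mat_vec N a v i))\<^sup>2) \<ge> 0" by (rule sum_nonneg) simp
    have "(vec_norm N (mat_vec N a v))\<^sup>2 = cmod (complex_of_real (\<Sum>i<N. (cmod (mat_vec N a v i))\<^sup>2))"
      unfolding vec_norm_def L2_set_def norm_of_real using s0 by simp
    also have "\<dots> \<le> (\<Sum>j<N. cmod (v j) * cmod (?w j))"
      unfolding sum_norm_square_mat_vec by (rule order_trans[OF norm_sum]) (simp add: norm_mult)
    also have "\<dots> \<le> vec_norm N v * vec_norm N ?w"
      unfolding vec_norm_def using L2_set_mult_ineq[of "\<lambda>j. cmod (v j)" "\<lambda>j. cmod (?w j)" "{..<N}"]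
      by simp
    also have "\<dots> \<le> 1 * (?c * 1)"
      using vec_norm_mat_vec_le[of N "mmul N (madj a) a" v] v vec_norm_nonneg[of N v]
        vec_norm_nonneg[of N ?w] c0
      unfolding mat_vec_mmul by (intro mult_mono) (auto intro: order_trans mult_left_le)
    finally show "vec_norm N (mat_vec N a v) \<le> sqrt ?c" by (simp add: real_le_rsqrt)
  qed
  then have "(opnorm N a)\<^sup>2 \<le> (sqrt ?c)\<^sup>2"
    using opnorm_nonneg[of N a] by (intro power_mono) auto
  then show ?thesis using c0 by simp
qed

lemma mmul_assoc: "mmul N (mmul N a b) c = mmul N a (mmul N b c)"
proof (intro ext)
  fix i j
  have "mmul N (mmul N a b) c i j = (\<Sum>l<N. \<Sum>m<N. a i m * b m l * c l j)"
    unfolding mmul_def by (simp add: sum_distrib_right)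
  also have "\<dots> = (\<Sum>m<N. \<Sum>l<N. a i m * b m l * c l j)" by (rule sum.swap)
  also have "\<dots> = mmul N a (mmul N b c) i j"
    unfolding mmul_def by (simp add: sum_distrib_left mult.assoc)
  finally show "mmul N (mmul N a b) c i j = mmul N a (mmul N b c) i j" .
qed

lemma mmul_mscale_left: "mmul N (mscale s a) b = mscale s (mmul N a b)"
  unfolding mmul_def mscale_def by (simp add: sum_distrib_left mult.assoc)

lemma madj_madj [simp]: "madj (madj a) = a"
  unfolding madj_def by simp

lemma madj_mdiff: "madj (mdiff a b) = mdiff (madj a) (madj b)"
  unfolding madj_def mdiff_def by simp

lemma opnorm_mdiff_self [simp]: "opnorm N (mdiff a a) = 0"
  by (rule opnorm_zero) (simp add: mdiff_def)

lemma opnorm_mdiff_triangle: "opnorm N (mdiff a c) \<le> opnorm N (mdiff a b) + opnorm N (mdiff b c)"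
  by (rule opnorm_add_le) (simp add: mdiff_def)

lemma opnorm_mdiff_commute: "opnorm N (mdiff a b) = opnorm N (mdiff b a)"
  using opnorm_scale_le[of N "mdiff a b" "-1" "mdiff b a"] opnorm_scale_le[of N "mdiff b a" "-1" "mdiff a b"]
  by (simp add: mdiff_def)

lemma opnorm_le_mdiff: "opnorm N a \<le> opnorm N b + opnorm N (mdiff a b)"
  by (rule opnorm_add_le) (simp add: mdiff_def)

lemma opnorm_mscale_mdiff_le:
  "cmod s = 1 \<Longrightarrow> opnorm N (mdiff (mscale s a) (mscale s b)) \<le> opnorm N (mdiff a b)"
  using opnorm_scale_le[of N "mdiff (mscale s a) (mscale s b)" s "mdiff a b"]
  by (simp add: mdiff_def mscale_def algebra_simps)

lemma opnorm_mmul_mdiff_le: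
  "opnorm N (mdiff (mmul N a1 a2) (mmul N b1 b2))
     \<le> opnorm N (mdiff a1 b1) * opnorm N a2 + opnorm N b1 * opnorm N (mdiff a2 b2)"
proof -
  have "opnorm N (mdiff (mmul N a1 a2) (mmul N b1 b2))
     \<le> opnorm N (mmul N (mdiff a1 b1) a2) + opnorm N (mmul N b1 (mdiff a2 b2))"
  proof (rule opnorm_add_le)
    fix i j
    have "mdiff (mmul N a1 a2) (mmul N b1 b2) i j = (\<Sum>l<N. a1 i l * a2 l j - b1 i l * b2 l j)"
      by (simp add: mdiff_def mmul_def sum_subtractf)
    also have "\<dots> = (\<Sum>l<N. (a1 i l - b1 i l) * a2 l j + b1 i l * (a2 l j - b2 l j))"
      by (rule sum.cong[OF refl]) (simp add: algebra_simps)
    finally show "mdiff (mmul N a1 a2) (mmul N b1 b2) i j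
        = mmul N (mdiff a1 b1) a2 i j + mmul N b1 (mdiff a2 b2) i j"
      by (simp add: mdiff_def mmul_def sum.distrib)
  qed
  also have "\<dots> \<le> opnorm N (mdiff a1 b1) * opnorm N a2 + opnorm N b1 * opnorm N (mdiff a2 b2)"
    by (intro add_mono opnorm_mmul_le)
  finally show ?thesis .
qed

lemma opnorm_madj_le: "opnorm N (madj a) \<le> opnorm N a"
proof -
  have "(opnorm N (madj a))\<^sup>2 \<le> opnorm N (mmul N (madj (madj a)) (madj a))"
    by (rule opnorm_square_le)
  also have "\<dots> \<le> opnorm N a * opnorm N (madj a)" using opnorm_mmul_le by simp
  finally have "opnorm N (madj a) * opnorm N (madj a) \<le> opnorm N a * opnorm N (madj a)"
    by (simp add: power2_eq_square)
  then show ?thesis using opnorm_nonneg[of N a] opnorm_nonneg[of N "madj a"]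
    by (cases "opnorm N (madj a) = 0") auto
qed

lemma opnorm_le_2_if_almost_isometry:
  assumes "opnorm N (mdiff (mmul N (madj x) x) mone) \<le> 1"
  shows "opnorm N x \<le> 2"
proof -
  have "(opnorm N x)\<^sup>2 \<le> opnorm N (mmul N (madj x) x)" by (rule opnorm_square_le)
  also have "\<dots> \<le> opnorm N mone + opnorm N (mdiff (mmul N (madj x) x) mone)" by (rule opnorm_le_mdiff)
  also have "\<dots> \<le> 2\<^sup>2" using opnorm_mone_le[of N] assms by simp
  finally show ?thesis by (rule power2_le_imp_le) simp
qed

lemma block_eq_refl [simp]: "block_eq N a a"
  unfolding block_eq_def by simp

lemma block_eq_trans [trans]: "block_eq N a b \<Longrightarrow> block_eq N b c \<Longrightarrow> block_eq N a c"
  unfolding block_eq_def by simp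

lemma mmul_block_cong: "block_eq N a a' \<Longrightarrow> block_eq N b b' \<Longrightarrow> block_eq N (mmul N a b) (mmul N a' b')"
  unfolding block_eq_def mmul_def by auto

lemma mdiff_block_cong: "block_eq N a a' \<Longrightarrow> block_eq N b b' \<Longrightarrow> block_eq N (mdiff a b) (mdiff a' b')"
  unfolding block_eq_def mdiff_def by auto

lemma mscale_block_cong: "block_eq N a a' \<Longrightarrow> block_eq N (mscale s a) (mscale s a')"
  unfolding block_eq_def mscale_def by auto

lemma mpow_block_cong: "block_eq N a a' \<Longrightarrow> block_eq N (mpow N a p) (mpow N a' p)"
  by (induction p) (auto intro: mmul_block_cong)

lemma mtrace_block_cong: "block_eq N a a' \<Longrightarrow> mtrace N a = mtrace N a'"
  unfolding block_eq_def mtrace_def by auto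

lemma mmul_mone_right: "block_eq N (mmul N a mone) a"
proof -
  have "mmul N a mone i j = a i j" if "j < N" for i j
  proof -
    have "mmul N a mone i j = (\<Sum>l<N. if l = j then a i l else 0)"
      unfolding mmul_def mone_def by (rule sum.cong) auto
    then show ?thesis using that by (simp add: sum.delta')
  qed
  then show ?thesis unfolding block_eq_def by auto
qed

section \<open>Amplification between levels\<close>

lemma sum_lessThan_mult_split:
  fixes f :: "nat \<Rightarrow> 'b::comm_monoid_add"
  shows "(\<Sum>s<a * m. f s) = (\<Sum>t<a. \<Sum>r<m. f (t * m + r))"
proof -
  have "(\<Sum>s<a * m. f s) = (\<Sum>t<a. sum f {t * m..<t * m + m})"
    by (rule sum.nat_group[symmetric])
  also have "\<dots> = (\<Sum>t<a. \<Sum>r<m. f (t * m + r))"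
  proof (rule sum.cong[OF refl])
    fix t
    have "sum f {t * m..<t * m + m} = sum f ((\<lambda>r. t * m + r) ` {..<m})"
      by (simp add: lessThan_atLeast0 image_add_atLeastLessThan add.commute)
    also have "\<dots> = (\<Sum>r<m. f (t * m + r))" by (subst sum.reindex) (auto simp: inj_on_def)
    finally show "sum f {t * m..<t * m + m} = (\<Sum>r<m. f (t * m + r))" .
  qed
  finally show ?thesis .
qed

lemma power_split_le: "j \<le> k \<Longrightarrow> (n::nat) ^ k = n ^ j * n ^ (k - j)"
  by (metis le_add_diff_inverse power_add)

lemma amp_apply:
  "amp n j k A i i' = (if i mod n^(k-j) = i' mod n^(k-j) then A (i div n^(k-j)) (i' div n^(k-j)) else 0)"
  unfolding amp_def Let_def by simp

lemma amp_madj: "amp n j k (madj A) = madj (amp n j k A)"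
  unfolding amp_def madj_def Let_def by (auto intro!: ext)

lemma amp_mdiff: "amp n j k (mdiff A B) = mdiff (amp n j k A) (amp n j k B)"
  unfolding amp_def mdiff_def Let_def by (auto intro!: ext)

lemma amp_mscale: "amp n j k (mscale s A) = mscale s (amp n j k A)"
  unfolding amp_def mscale_def Let_def by (auto intro!: ext)

lemma amp_mone:
  assumes "n \<ge> 1"
  shows "amp n j k mone = mone"
proof (intro ext)
  fix i i'
  have "n ^ (k - j) > 0" using assms by simp
  then show "amp n j k mone i i' = mone i i'"
    unfolding amp_apply mone_def by (auto, metis div_mult_mod_eq)
qed

lemma amp_block_cong:
  fixes n :: nat
  assumes "n \<ge> 1" "j \<le> k" "block_eq (n^j) A A'"
  shows "block_eq (n^k) (amp n j k A) (amp n j k A')"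
proof -
  have "i div n ^ (k - j) < n ^ j" if "i < n ^ k" for i
    using assms that power_split_le[of j k n] by (simp add: less_mult_imp_div_less)
  then show ?thesis using assms unfolding block_eq_def amp_apply by auto
qed

lemma amp_mmul:
  assumes n: "n \<ge> 1" and jk: "j \<le> k"
  shows "block_eq (n^k) (mmul (n^k) (amp n j k A) (amp n j k B)) (amp n j k (mmul (n^j) A B))"
  unfolding block_eq_def
proof (intro allI impI)
  fix i i'
  define m where "m = n ^ (k - j)"
  have m: "m > 0" using n by (simp add: m_def)
  have inner: "(\<Sum>r<m. amp n j k A i (t * m + r) * amp n j k B (t * m + r) i')
      = (if i mod m = i' mod m then A (i div m) t * B t (i' div m) else 0)" for t
  proof -
    have "(\<Sum>r<m. amp n j k A i (t * m + r) * amp n j k B (t * m + r) i')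
        = (\<Sum>r<m. if r = i mod m then (if i mod m = i' mod m then A (i div m) t * B t (i' div m) else 0) else 0)"
    proof (rule sum.cong[OF refl])
      fix r assume "r \<in> {..<m}"
      then have "(t * m + r) div m = t" "(t * m + r) mod m = r" using m by auto
      then show "amp n j k A i (t * m + r) * amp n j k B (t * m + r) i'
          = (if r = i mod m then (if i mod m = i' mod m then A (i div m) t * B t (i' div m) else 0) else 0)"
        unfolding amp_apply m_def[symmetric] by auto
    qed
    then show ?thesis using m by (simp add: sum.delta')
  qed
  have "mmul (n^k) (amp n j k A) (amp n j k B) i i'
      = (\<Sum>t<n^j. \<Sum>r<m. amp n j k A i (t * m + r) * amp n j k B (t * m + r) i')"
    unfolding mmul_def power_split_le[OF jk] m_def by (rule sum_lessThan_mult_split)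
  also have "\<dots> = amp n j k (mmul (n^j) A B) i i'"
    unfolding inner by (simp add: amp_apply mmul_def flip: m_def)
  finally show "mmul (n^k) (amp n j k A) (amp n j k B) i i' = amp n j k (mmul (n^j) A B) i i'" .
qed

lemma amp_mpow:
  assumes n: "n \<ge> 1" and jk: "j \<le> k"
  shows "block_eq (n^k) (mpow (n^k) (amp n j k A) p) (amp n j k (mpow (n^j) A p))"
proof (induction p)
  case 0 then show ?case using amp_mone[OF n] by simp
next
  case (Suc p)
  have "block_eq (n^k) (mmul (n^k) (mpow (n^k) (amp n j k A) p) (amp n j k A))
                       (mmul (n^k) (amp n j k (mpow (n^j) A p)) (amp n j k A))"
    by (rule mmul_block_cong[OF Suc block_eq_refl])
  also have "block_eq (n^k) \<dots> (amp n j k (mpow (n^j) A (Suc p)))"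
    using amp_mmul[OF n jk] by simp
  finally show ?case by simp
qed

lemma mtrace_amp:
  assumes n: "n \<ge> 1" and jk: "j \<le> k"
  shows "mtrace (n^k) (amp n j k A) = of_nat (n^(k-j)) * mtrace (n^j) A"
proof -
  define m where "m = n ^ (k - j)"
  have m: "m > 0" using n by (simp add: m_def)
  have "mtrace (n^k) (amp n j k A) = (\<Sum>t<n^j. \<Sum>r<m. amp n j k A (t * m + r) (t * m + r))"
    unfolding mtrace_def power_split_le[OF jk] m_def by (rule sum_lessThan_mult_split)
  also have "\<dots> = (\<Sum>t<n^j. \<Sum>r<m. A t t)"
  proof (intro sum.cong refl)
    fix t r assume "r \<in> {..<m}"
    then have "(t * m + r) div m = t" using m by auto
    then show "amp n j k A (t * m + r) (t * m + r) = A t t" unfolding amp_apply m_def[symmetric] by simp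
  qed
  finally show ?thesis unfolding mtrace_def by (simp add: sum_distrib_left m_def)
qed

lemma amp_amp:
  assumes n: "n \<ge> 1" and jj: "j \<le> j'" and jk: "j' \<le> k"
  shows "amp n j' k (amp n j j' A) = amp n j k A"
proof (intro ext)
  fix i i'
  define m1 where "m1 = n ^ (k - j')"
  define m2 where "m2 = n ^ (j' - j)"
  have "k - j = (k - j') + (j' - j)" using jj jk by simp
  then have m12: "n ^ (k - j) = m1 * m2" unfolding m1_def m2_def by (simp add: power_add)
  have m1: "m1 > 0" using n by (simp add: m1_def)
  have mm: "x mod (m1 * m2) = m1 * (x div m1 mod m2) + x mod m1" for x by (rule mod_mult2_eq)
  have cond: "(i mod m1 = i' mod m1 \<and> i div m1 mod m2 = i' div m1 mod m2)
      \<longleftrightarrow> i mod (m1 * m2) = i' mod (m1 * m2)"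
  proof
    assume "i mod (m1 * m2) = i' mod (m1 * m2)"
    then have e: "m1 * (i div m1 mod m2) + i mod m1 = m1 * (i' div m1 mod m2) + i' mod m1"
      by (simp add: mm)
    show "i mod m1 = i' mod m1 \<and> i div m1 mod m2 = i' div m1 mod m2"
      using arg_cong[OF e, of "\<lambda>x. x mod m1"] arg_cong[OF e, of "\<lambda>x. x div m1"] m1 by simp
  qed (simp add: mm)
  show "amp n j' k (amp n j j' A) i i' = amp n j k A i i'"
    unfolding amp_apply m1_def[symmetric] m2_def[symmetric] m12 div_mult2_eq[symmetric] using cond by auto
qed

section \<open>A logarithm of the determinant\<close>

definition mat_of :: "nat \<Rightarrow> cmat \<Rightarrow> complex mat" where
  "mat_of N a = mat N N (\<lambda>(i,j). a i j)"

lemma mat_of_carrier [simp]: "mat_of N a \<in> carrier_mat N N"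
  unfolding mat_of_def by simp

lemma mat_of_dim [simp]: "dim_row (mat_of N a) = N" "dim_col (mat_of N a) = N"
  unfolding mat_of_def by simp_all

lemma mat_of_index [simp]: "i < N \<Longrightarrow> j < N \<Longrightarrow> mat_of N a $$ (i,j) = a i j"
  unfolding mat_of_def by simp

lemma mat_of_mmul: "mat_of N (mmul N a b) = mat_of N a * mat_of N b"
  by (rule eq_matI) (auto simp: mmul_def scalar_prod_def atLeast0LessThan)

lemma mat_of_mone: "mat_of N mone = 1\<^sub>m N"
  by (rule eq_matI) (auto simp: mone_def)

lemma mat_of_mpow: "mat_of N (mpow N a p) = mat_of N a ^\<^sub>m p"
  by (induction p) (simp_all add: mat_of_mone mat_of_mmul)

lemma mat_of_mscale: "mat_of N (mscale s a) = s \<cdot>\<^sub>m mat_of N a"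
  by (rule eq_matI) (auto simp: mscale_def)

lemma det_mat_of_madj: "det (mat_of N (madj a)) = cnj (det (mat_of N a))"
proof -
  have "det (mat_of N (madj a)) = det (transpose_mat (mat_of N (madj a)))"
    by (rule det_transpose[symmetric, of _ N]) simp
  also have "\<dots> = (\<Sum>p\<in>{p. p permutes {0..<N}}. signof p * (\<Prod>i=0..<N. cnj (a i (p i))))"
    by (subst det_def'[of _ N]) (auto simp: madj_def intro!: sum.cong prod.cong)
  also have "\<dots> = cnj (det (mat_of N a))"
    by (subst det_def'[of _ N]) (auto simp: cnj_sum cnj_prod sign_def intro!: sum.cong prod.cong)
  finally show ?thesis .
qed

definition mat_trace :: "complex mat \<Rightarrow> complex" where
  "mat_trace M = (\<Sum>i<dim_row M. M $$ (i,i))"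

lemma mtrace_eq_mat_trace: "mtrace N a = mat_trace (mat_of N a)"
  unfolding mtrace_def mat_trace_def by simp

lemma mat_trace_mult_commute:
  assumes "X \<in> carrier_mat n n" "Y \<in> carrier_mat n n"
  shows "mat_trace (X * Y) = mat_trace (Y * X)"
proof -
  have "mat_trace (X * Y) = (\<Sum>i<n. \<Sum>l<n. X $$ (i,l) * Y $$ (l,i))"
    unfolding mat_trace_def using assms by (simp add: scalar_prod_def atLeast0LessThan)
  also have "\<dots> = (\<Sum>l<n. \<Sum>i<n. Y $$ (l,i) * X $$ (i,l))"
    by (subst sum.swap) (simp add: mult.commute)
  also have "\<dots> = mat_trace (Y * X)"
    unfolding mat_trace_def using assms by (simp add: scalar_prod_def atLeast0LessThan)
  finally show ?thesis .
qed

lemma upper_triangular_mult: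
  assumes X: "X \<in> carrier_mat n n" and Y: "Y \<in> carrier_mat n n"
    and uX: "upper_triangular X" and uY: "upper_triangular Y"
  shows "upper_triangular (X * Y)" and "\<And>i. i < n \<Longrightarrow> (X * Y) $$ (i,i) = X $$ (i,i) * Y $$ (i,i)"
proof -
  have vanish: "X $$ (i,l) * Y $$ (l,j) = 0"
    if "i < n" "l < n" "j \<le> i" "j < i \<or> l \<noteq> i" for i l j
  proof (cases "l < i")
    case True then show ?thesis using that uX X by (simp add: upper_triangularD)
  next
    case False
    then have "j < l" using that by linarith
    then show ?thesis using that uY Y by (simp add: upper_triangularD)
  qed
  show "upper_triangular (X * Y)"
  proof (rule upper_triangularI)
    fix i j assume "j < i" and "i < dim_row (X * Y)"
    then show "(X * Y) $$ (i, j) = 0"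
      using X Y vanish by (auto simp: scalar_prod_def intro!: sum.neutral)
  qed
  fix i assume i: "i < n"
  have "(X * Y) $$ (i, i) = (\<Sum>l\<in>{0..<n}. X $$ (i,l) * Y $$ (l,i))"
    using X Y i by (simp add: scalar_prod_def)
  also have "\<dots> = (\<Sum>l\<in>{0..<n}. if l = i then X $$ (i,i) * Y $$ (i,i) else 0)"
    using i vanish[of i _ i] by (intro sum.cong) auto
  finally show "(X * Y) $$ (i,i) = X $$ (i,i) * Y $$ (i,i)" using i by simp
qed

lemma upper_triangular_pow:
  assumes B: "B \<in> carrier_mat n n" and uB: "upper_triangular B"
  shows "upper_triangular (B ^\<^sub>m p)" and "\<And>i. i < n \<Longrightarrow> (B ^\<^sub>m p) $$ (i,i) = (B $$ (i,i)) ^ p"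
proof -
  have "upper_triangular (B ^\<^sub>m p) \<and> (\<forall>i<n. (B ^\<^sub>m p) $$ (i,i) = (B $$ (i,i)) ^ p)"
  proof (induction p)
    case 0 then show ?case using B by auto
  next
    case (Suc p)
    have Bp: "B ^\<^sub>m p \<in> carrier_mat n n" using B by simp
    show ?case using Suc upper_triangular_mult[OF Bp B _ uB]
      by (auto simp: power_Suc2 simp del: power_Suc)
  qed
  then show "upper_triangular (B ^\<^sub>m p)" "\<And>i. i < n \<Longrightarrow> (B ^\<^sub>m p) $$ (i,i) = (B $$ (i,i)) ^ p"
    by auto
qed

lemma norm_eigenvalue_le_opnorm:
  assumes "eigenvalue (mat_of N D) e"
  shows "cmod e \<le> opnorm N D"
proof -
  obtain v where "eigenvector (mat_of N D) v e" using assms unfolding eigenvalue_def by blast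
  then have vc: "v \<in> carrier_vec N" and vnz: "v \<noteq> 0\<^sub>v N" and eq: "mat_of N D *\<^sub>v v = e \<cdot>\<^sub>v v"
    unfolding eigenvector_def by auto
  define w where "w = (\<lambda>j. if j < N then v $ j else 0)"
  have "mat_vec N D w i = e * w i" if i: "i < N" for i
  proof -
    have "mat_vec N D w i = (mat_of N D *\<^sub>v v) $ i"
      using i vc unfolding mat_vec_def w_def by (simp add: scalar_prod_def atLeast0LessThan)
    then show ?thesis using eq i vc by (simp add: w_def)
  qed
  then have Dw: "vec_norm N (mat_vec N D w) = cmod e * vec_norm N w"
    by (simp add: vec_norm_scale[symmetric] cong: vec_norm_cong)
  have "vec_norm N w \<noteq> 0"
  proof
    assume "vec_norm N w = 0"
    then have "v = 0\<^sub>v N" using vc vec_norm_eq_0D[of N w] by (intro eq_vecI) (auto simp: w_def)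
    with vnz show False by simp
  qed
  then have "vec_norm N w > 0" using vec_norm_nonneg[of N w] by simp
  then show ?thesis using vec_norm_mat_vec_le[of N D w] unfolding Dw by simp
qed

lemma mat_trace_power_similar_upper_triangular:
  assumes sim: "similar_mat_wit A B P Q" and A: "A \<in> carrier_mat N N" and uB: "upper_triangular B"
  shows "mat_trace (A ^\<^sub>m p) = (\<Sum>i<N. (B $$ (i,i)) ^ p)"
proof -
  from sim A have Bc: "B \<in> carrier_mat N N" and Pc: "P \<in> carrier_mat N N"
    and Qc: "Q \<in> carrier_mat N N" and QP: "Q * P = 1\<^sub>m N"
    unfolding similar_mat_wit_def Let_def by auto
  have Bp: "B ^\<^sub>m p \<in> carrier_mat N N" using Bc by simp
  have "mat_trace (A ^\<^sub>m p) = mat_trace (Q * (P * B ^\<^sub>m p))"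
    unfolding similar_mat_wit_pow_id[OF sim] using Pc Qc Bp by (intro mat_trace_mult_commute[of _ N]) auto
  also have "Q * (P * B ^\<^sub>m p) = (Q * P) * B ^\<^sub>m p"
    using Pc Qc Bp by (simp add: assoc_mult_mat)
  also have "\<dots> = B ^\<^sub>m p" unfolding QP using Bp by (rule left_mult_one_mat)
  finally show ?thesis
    unfolding mat_trace_def using upper_triangular_pow[OF Bc uB] Bc by simp
qed

lemma triangularized_spectrum:
  obtains d where "\<And>i. i < N \<Longrightarrow> eigenvalue (mat_of N D) (d i)"
    and "\<And>p. mtrace N (mpow N D p) = (\<Sum>i<N. d i ^ p)"
    and "det (mat_of N (mdiff mone D)) = (\<Prod>i<N. 1 - d i)"
proof -
  define Dm where "Dm = mat_of N D"
  have Dc: "Dm \<in> carrier_mat N N" unfolding Dm_def by simp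
  obtain es where cp: "char_poly Dm = (\<Prod>a\<leftarrow>es. [:- a, 1:])"
    using char_poly_factorized[OF Dc] by blast
  obtain B P Q where sd: "schur_decomposition Dm es = (B,P,Q)"
    by (cases "schur_decomposition Dm es") auto
  from schur_decomposition[OF Dc cp sd] have sim: "similar_mat_wit Dm B P Q"
    and uB: "upper_triangular B" and dB: "diag_mat B = es" by auto
  from sim Dc have Bc: "B \<in> carrier_mat N N" unfolding similar_mat_wit_def Let_def by auto
  define d where "d = (\<lambda>i. B $$ (i,i))"
  have es: "es = map d [0..<N]" using dB Bc unfolding diag_mat_def d_def by auto
  show thesis
  proof
    fix i assume "i < N"
    then have "poly (char_poly Dm) (d i) = 0"
      unfolding cp poly_prod_list es by (auto simp: prod_list_zero_iff)
    then show "eigenvalue (mat_of N D) (d i)"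
      using eigenvalue_root_char_poly[OF Dc] by (simp add: Dm_def)
  next
    show "mtrace N (mpow N D p) = (\<Sum>i<N. d i ^ p)" for p
      unfolding mtrace_eq_mat_trace mat_of_mpow d_def
      by (rule mat_trace_power_similar_upper_triangular[OF sim[unfolded Dm_def] _ uB]) simp
  next
    have "- char_matrix Dm 1 = mat_of N (mdiff mone D)"
      unfolding char_matrix_def Dm_def by (rule eq_matI) (auto simp: mdiff_def mone_def)
    then have "det (mat_of N (mdiff mone D)) = poly (char_poly Dm) 1"
      using char_poly_matrix[OF Dc, of 1] by simp
    also have "\<dots> = prod_list (map (\<lambda>i. 1 - d i) [0..<N])"
      unfolding cp poly_prod_list es by (simp add: o_def)
    also have "\<dots> = (\<Prod>i<N. 1 - d i)"
      by (simp add: prod.distinct_set_conv_list[symmetric] atLeast0LessThan)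
    finally show "det (mat_of N (mdiff mone D)) = (\<Prod>i<N. 1 - d i)" .
  qed
qed

lemma Ln_one_minus_sums:
  assumes "cmod e < 1"
  shows "(\<lambda>p. - (e ^ Suc p) / of_nat (Suc p)) sums Ln (1 - e)"
proof -
  have "(\<lambda>n. (-1)^Suc n / of_nat n * (-e)^n) sums ln (1 + (-e))"
    by (rule Ln_series) (use assms in simp)
  then have "(\<lambda>n. - (e ^ n) / of_nat n) sums Ln (1 - e)"
    by (simp add: power_minus' field_simps)
  then show ?thesis using sums_Suc_iff[of "\<lambda>n. - (e ^ n) / of_nat n"] by simp
qed

text \<open>The power series of \<open>tr (log (1 - D))\<close>, a logarithm of \<open>det (1 - D)\<close> when \<open>\<parallel>D\<parallel> < 1\<close>.\<close>

definition log_det_term :: "nat \<Rightarrow> cmat \<Rightarrow> nat \<Rightarrow> complex" where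
  "log_det_term N D p = - mtrace N (mpow N D (Suc p)) / of_nat (Suc p)"

definition log_det :: "nat \<Rightarrow> cmat \<Rightarrow> complex" where
  "log_det N D = (\<Sum>p. log_det_term N D p)"

lemma log_det_sums_exp_eq_det:
  assumes "opnorm N D < 1"
  shows "log_det_term N D sums log_det N D" and "exp (log_det N D) = det (mat_of N (mdiff mone D))"
proof -
  obtain d where ev: "\<And>i. i < N \<Longrightarrow> eigenvalue (mat_of N D) (d i)"
    and tr: "\<And>p. mtrace N (mpow N D p) = (\<Sum>i<N. d i ^ p)"
    and det: "det (mat_of N (mdiff mone D)) = (\<Prod>i<N. 1 - d i)"
    by (rule triangularized_spectrum[of N D]) (rule that)
  have small: "cmod (d i) < 1" if "i < N" for i
    using norm_eigenvalue_le_opnorm[OF ev[OF that]] assms by simp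
  have "(\<lambda>p. \<Sum>i<N. - (d i ^ Suc p) / of_nat (Suc p)) sums (\<Sum>i<N. Ln (1 - d i))"
    by (intro sums_sum Ln_one_minus_sums small) simp
  then have S: "log_det_term N D sums (\<Sum>i<N. Ln (1 - d i))"
    unfolding log_det_term_def tr by (simp add: sum_divide_distrib sum_negf)
  then show "log_det_term N D sums log_det N D"
    unfolding log_det_def by (simp add: sums_iff)
  have "exp (\<Sum>i<N. Ln (1 - d i)) = (\<Prod>i<N. exp (Ln (1 - d i)))" by (simp add: exp_sum)
  also have "\<dots> = det (mat_of N (mdiff mone D))"
  proof (unfold det, intro prod.cong refl)
    fix i assume "i \<in> {..<N}"
    then have "1 - d i \<noteq> 0" using small[of i] by auto
    then show "exp (Ln (1 - d i)) = 1 - d i" by simp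
  qed
  finally have "exp (\<Sum>i<N. Ln (1 - d i)) = det (mat_of N (mdiff mone D))" .
  then show "exp (log_det N D) = det (mat_of N (mdiff mone D))"
    using S unfolding log_det_def by (simp add: sums_iff)
qed

lemma norm_log_det_term_le:
  assumes "opnorm N D \<le> q"
  shows "cmod (log_det_term N D p) \<le> real N * q ^ Suc p"
proof -
  have "cmod (log_det_term N D p) \<le> cmod (mtrace N (mpow N D (Suc p)))"
    unfolding log_det_term_def norm_divide norm_minus_cancel norm_of_nat
    by (simp add: divide_le_eq mult_le_cancel_left1)
  also have "\<dots> \<le> real N * opnorm N (mpow N D (Suc p))" by (rule norm_mtrace_le)
  also have "\<dots> \<le> real N * q ^ Suc p"
    using opnorm_mpow_le[of N D "Suc p"] power_mono[OF assms opnorm_nonneg, of "Suc p"]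
    by (intro mult_left_mono) auto
  finally show ?thesis .
qed

lemma norm_log_det_le:
  assumes "opnorm N D \<le> q" "q \<le> 1/2"
  shows "cmod (log_det N D) \<le> 2 * real N * q"
proof -
  have q0: "q \<ge> 0" using opnorm_nonneg[of N D] assms by simp
  have "(\<lambda>p. real N * q * q ^ p) sums (real N * q * (1 / (1 - q)))"
    by (intro sums_mult geometric_sums) (use assms q0 in simp)
  then have G: "(\<lambda>p. real N * q ^ Suc p) sums (real N * (q / (1 - q)))"
    by (simp add: mult.assoc)
  have "cmod (log_det N D) \<le> (\<Sum>p. real N * q ^ Suc p)"
    unfolding log_det_def by (rule norm_suminf_le[OF norm_log_det_term_le[OF assms(1)] sums_summable[OF G]])
  also have "\<dots> = real N * (q / (1 - q))" by (rule sums_unique[OF G, symmetric])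
  also have "\<dots> \<le> real N * (2 * q)"
  proof (intro mult_left_mono)
    have "q * (2 * q) \<le> q * 1" using assms q0 by (intro mult_left_mono) auto
    then show "q / (1 - q) \<le> 2 * q" using assms by (simp add: divide_le_eq algebra_simps)
  qed simp
  finally show ?thesis by simp
qed

lemma log_det_block_cong:
  assumes "block_eq N D D'"
  shows "log_det N D = log_det N D'"
proof -
  have "log_det_term N D = log_det_term N D'"
    unfolding log_det_term_def by (intro ext) (simp only: mtrace_block_cong[OF mpow_block_cong[OF assms]])
  then show ?thesis unfolding log_det_def by simp
qed

lemma log_det_amp:
  assumes n: "n \<ge> 1" and jk: "j \<le> k" and D: "opnorm (n^j) D < 1"
  shows "log_det (n^k) (amp n j k D) = of_nat (n^(k-j)) * log_det (n^j) D"
proof -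
  have "log_det_term (n^k) (amp n j k D) = (\<lambda>p. of_nat (n^(k-j)) * log_det_term (n^j) D p)"
    unfolding log_det_term_def mtrace_block_cong[OF amp_mpow[OF n jk]] mtrace_amp[OF n jk] by auto
  then show ?thesis
    unfolding log_det_def by (simp only: suminf_mult[OF sums_summable[OF log_det_sums_exp_eq_det(1)[OF D]]])
qed

section \<open>Group commutators and their defect\<close>

definition mcomm :: "nat \<Rightarrow> cmat \<Rightarrow> cmat \<Rightarrow> cmat" where
  "mcomm N A B = mmul N (mmul N (mmul N A B) (madj A)) (madj B)"

definition comm_defect :: "nat \<Rightarrow> complex \<Rightarrow> cmat \<Rightarrow> cmat \<Rightarrow> cmat" where
  "comm_defect N w A B = mdiff mone (mscale (cnj w) (mcomm N A B))"

lemma cnj_mult_unimodular: "cmod (s::complex) = 1 \<Longrightarrow> cnj s * s = 1"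
  by (metis complex_norm_square mult.commute of_real_1 one_power2)

lemma cnj_unimodular: "cmod (s::complex) = 1 \<Longrightarrow> cnj s = inverse s"
  using cnj_mult_unimodular[of s] by (intro inverse_unique[symmetric]) (simp add: mult.commute)

lemma det_one_minus_comm_defect:
  "\<exists>r\<ge>0. det (mat_of N (mdiff mone (comm_defect N w A B))) = cnj w ^ N * of_real r"
proof -
  have mdiff_mone: "mdiff mone (comm_defect N w A B) = mscale (cnj w) (mcomm N A B)"
    unfolding comm_defect_def mdiff_def by simp
  define dA where "dA = det (mat_of N A)"
  define dB where "dB = det (mat_of N B)"
  have c: "mat_of N A * mat_of N B \<in> carrier_mat N N"
    "mat_of N A * mat_of N B * mat_of N (madj A) \<in> carrier_mat N N"
    by (auto intro!: mult_carrier_mat)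
  have "det (mat_of N (mcomm N A B)) = dA * dB * cnj dA * cnj dB"
    unfolding mcomm_def mat_of_mmul dA_def dB_def det_mat_of_madj[symmetric]
    by (simp add: det_mult[OF c(2)] det_mult[OF c(1)] det_mult[of _ N])
  also have "\<dots> = (dA * cnj dA) * (dB * cnj dB)" by (simp add: algebra_simps)
  also have "\<dots> = of_real ((cmod dA)\<^sup>2 * (cmod dB)\<^sup>2)"
    by (simp only: of_real_mult complex_norm_square)
  finally show ?thesis
    unfolding mdiff_mone mat_of_mscale det_smult by (intro exI[of _ "(cmod dA)\<^sup>2 * (cmod dB)\<^sup>2"]) simp
qed

lemma amp_mcomm:
  assumes n: "n \<ge> 1" and jk: "j \<le> k"
  shows "block_eq (n^k) (mcomm (n^k) (amp n j k X) (amp n j k Y)) (amp n j k (mcomm (n^j) X Y))"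
proof -
  note mult = amp_mmul[OF n jk] and cong = mmul_block_cong[OF _ block_eq_refl]
  have "block_eq (n^k) (mcomm (n^k) (amp n j k X) (amp n j k Y))
      (mmul (n^k) (mmul (n^k) (amp n j k (mmul (n^j) X Y)) (amp n j k (madj X))) (amp n j k (madj Y)))"
    unfolding mcomm_def amp_madj by (intro cong mult)
  also have "block_eq (n^k) \<dots> (mmul (n^k) (amp n j k (mmul (n^j) (mmul (n^j) X Y) (madj X))) (amp n j k (madj Y)))"
    by (intro cong mult)
  also have "block_eq (n^k) \<dots> (amp n j k (mcomm (n^j) X Y))"
    unfolding mcomm_def by (rule mult)
  finally show ?thesis .
qed

lemma amp_comm_defect:
  assumes n: "n \<ge> 1" and jk: "j \<le> k"
  shows "block_eq (n^k) (comm_defect (n^k) w (amp n j k X) (amp n j k Y)) (amp n j k (comm_defect (n^j) w X Y))"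
  unfolding comm_defect_def amp_mdiff amp_mscale amp_mone[OF n]
  by (intro mdiff_block_cong mscale_block_cong block_eq_refl amp_mcomm[OF n jk])

lemma opnorm_mmul_le_bound: "opnorm N a \<le> s \<Longrightarrow> opnorm N b \<le> t \<Longrightarrow> opnorm N (mmul N a b) \<le> s * t"
  using opnorm_mmul_le[of N a b] mult_mono[of "opnorm N a" s "opnorm N b" t] opnorm_nonneg[of N a]
    opnorm_nonneg[of N b] by linarith

lemma opnorm_mmul_mdiff_le_bound:
  assumes "opnorm N (mdiff a1 b1) \<le> d1" "opnorm N (mdiff a2 b2) \<le> d2"
    and "opnorm N a2 \<le> s" "opnorm N b1 \<le> t"
  shows "opnorm N (mdiff (mmul N a1 a2) (mmul N b1 b2)) \<le> d1 * s + t * d2"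
proof -
  have "opnorm N (mdiff a1 b1) * opnorm N a2 \<le> d1 * s" "opnorm N b1 * opnorm N (mdiff a2 b2) \<le> t * d2"
    using assms opnorm_nonneg by (auto intro!: mult_mono order_trans[OF opnorm_nonneg])
  then show ?thesis using opnorm_mmul_mdiff_le[of N a1 a2 b1 b2] by linarith
qed

lemma opnorm_mmul_mdiff_right_le:
  "opnorm N (mdiff a b) \<le> d \<Longrightarrow> opnorm N c \<le> s \<Longrightarrow> opnorm N (mdiff (mmul N a c) (mmul N b c)) \<le> d * s"
  using opnorm_mmul_mdiff_le_bound[of N a b d c c 0 s "opnorm N b"] by simp

lemma opnorm_mmul_mdiff_left_le:
  "opnorm N c \<le> t \<Longrightarrow> opnorm N (mdiff a b) \<le> d \<Longrightarrow> opnorm N (mdiff (mmul N c a) (mmul N c b)) \<le> t * d"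
  using opnorm_mmul_mdiff_le_bound[of N c c 0 a b d "opnorm N a" t] by simp

lemma opnorm_twisted_commutator_le:
  assumes "cmod a = 1" "cmod b = 1"
  shows "opnorm N (mdiff (mmul N X Y) (mscale (a * cnj b) (mmul N Y X)))
    \<le> opnorm N (mdiff (mmul N X Y) (mscale a Z)) + opnorm N (mdiff (mmul N Y X) (mscale b Z))"
proof -
  have "opnorm N (mdiff (mscale a Z) (mscale (a * cnj b) (mmul N Y X)))
      \<le> cmod (- a * cnj b) * opnorm N (mdiff (mmul N Y X) (mscale b Z))"
  proof (rule opnorm_scale_le)
    fix i j
    show "mdiff (mscale a Z) (mscale (a * cnj b) (mmul N Y X)) i j
        = - a * cnj b * mdiff (mmul N Y X) (mscale b Z) i j"
      using cnj_mult_unimodular[OF assms(2)] unfolding mdiff_def mscale_def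
      by (simp add: algebra_simps)
  qed
  then show ?thesis
    using assms opnorm_mdiff_triangle[of N "mmul N X Y" "mscale (a * cnj b) (mmul N Y X)" "mscale a Z"]
    by (simp add: norm_mult)
qed

lemma opnorm_comm_defect_le:
  assumes w: "cmod w = 1" and X: "opnorm N X \<le> 2" and Y: "opnorm N Y \<le> 2"
  shows "opnorm N (comm_defect N w X Y)
    \<le> 4 * opnorm N (mdiff (mmul N X Y) (mscale w (mmul N Y X)))
      + 4 * opnorm N (mdiff (mmul N X (madj X)) mone) + opnorm N (mdiff (mmul N Y (madj Y)) mone)"
proof -
  have Xa: "opnorm N (madj X) \<le> 2" and Ya: "opnorm N (madj Y) \<le> 2"
    using X Y opnorm_madj_le[of N X] opnorm_madj_le[of N Y] by linarith+
  define M where "M = mmul N (mmul N Y (mmul N X (madj X))) (madj Y)"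
  have "opnorm N (comm_defect N w X Y) \<le> cmod (- cnj w) * opnorm N (mdiff (mcomm N X Y) (mscale w mone))"
  proof (rule opnorm_scale_le)
    have "w * cnj w = 1" using cnj_mult_unimodular[OF w] by (simp add: mult.commute)
    then show "comm_defect N w X Y i j = - cnj w * mdiff (mcomm N X Y) (mscale w mone) i j" for i j
      by (simp add: comm_defect_def mdiff_def mscale_def algebra_simps)
  qed
  also have "\<dots> \<le> opnorm N (mdiff (mcomm N X Y) (mscale w M)) + opnorm N (mdiff (mscale w M) (mscale w mone))"
    using w by (simp add: opnorm_mdiff_triangle)
  also have "opnorm N (mdiff (mcomm N X Y) (mscale w M))
      \<le> opnorm N (mdiff (mmul N X Y) (mscale w (mmul N Y X))) * 2 * 2"
  proof -
    have M: "mscale w M = mmul N (mmul N (mscale w (mmul N Y X)) (madj X)) (madj Y)"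
      unfolding M_def mmul_mscale_left mmul_assoc ..
    show ?thesis
      unfolding mcomm_def M by (intro opnorm_mmul_mdiff_right_le[OF opnorm_mmul_mdiff_right_le[OF order_refl Xa] Ya])
  qed
  also have "opnorm N (mdiff (mscale w M) (mscale w mone)) \<le> opnorm N (mdiff M mone)"
    using w by (rule opnorm_mscale_mdiff_le)
  also have "opnorm N (mdiff M mone)
      \<le> 4 * opnorm N (mdiff (mmul N X (madj X)) mone) + opnorm N (mdiff (mmul N Y (madj Y)) mone)"
  proof -
    have "opnorm N (mdiff M (mmul N (mmul N Y mone) (madj Y)))
        \<le> 2 * opnorm N (mdiff (mmul N X (madj X)) mone) * 2"
      unfolding M_def by (intro opnorm_mmul_mdiff_right_le[OF opnorm_mmul_mdiff_left_le[OF Y order_refl] Ya])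
    moreover have "opnorm N (mdiff (mmul N (mmul N Y mone) (madj Y)) mone)
        = opnorm N (mdiff (mmul N Y (madj Y)) mone)"
      by (intro opnorm_cong mdiff_block_cong mmul_block_cong mmul_mone_right block_eq_refl)
    ultimately show ?thesis
      using opnorm_mdiff_triangle[of N M mone "mmul N (mmul N Y mone) (madj Y)"] by simp
  qed
  finally show ?thesis by simp
qed

lemma opnorm_mcomm_mdiff_le:
  assumes A: "opnorm N (mdiff A X) \<le> d" and B: "opnorm N (mdiff B Y) \<le> d"
    and bounds: "opnorm N A \<le> 3" "opnorm N B \<le> 3" "opnorm N X \<le> 3" "opnorm N Y \<le> 3"
  shows "opnorm N (mdiff (mcomm N A B) (mcomm N X Y)) \<le> 108 * d"
proof -
  have Aa: "opnorm N (mdiff (madj A) (madj X)) \<le> d" and Ba: "opnorm N (mdiff (madj B) (madj Y)) \<le> d"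
    using A B opnorm_madj_le[of N "mdiff A X"] opnorm_madj_le[of N "mdiff B Y"]
    unfolding madj_mdiff by linarith+
  have adj: "opnorm N (madj A) \<le> 3" "opnorm N (madj B) \<le> 3"
    using bounds opnorm_madj_le[of N A] opnorm_madj_le[of N B] by linarith+
  have XY: "opnorm N (mmul N X Y) \<le> 9"
    using opnorm_mmul_le_bound[OF bounds(3,4)] by simp
  have XYX: "opnorm N (mmul N (mmul N X Y) (madj X)) \<le> 27"
    using opnorm_mmul_le_bound[OF XY order_trans[OF opnorm_madj_le bounds(3)]] by simp
  have "opnorm N (mdiff (mmul N A B) (mmul N X Y)) \<le> d * 3 + 3 * d"
    by (rule opnorm_mmul_mdiff_le_bound[OF A B bounds(2,3)])
  then have "opnorm N (mdiff (mmul N (mmul N A B) (madj A)) (mmul N (mmul N X Y) (madj X)))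
      \<le> (d * 3 + 3 * d) * 3 + 9 * d"
    by (rule opnorm_mmul_mdiff_le_bound[OF _ Aa adj(1) XY])
  then have "opnorm N (mdiff (mcomm N A B) (mcomm N X Y))
      \<le> ((d * 3 + 3 * d) * 3 + 9 * d) * 3 + 27 * d"
    unfolding mcomm_def by (rule opnorm_mmul_mdiff_le_bound[OF _ Ba adj(2) XYX])
  then show ?thesis by simp
qed

lemma opnorm_comm_defect_le_mdiff:
  assumes "cmod w = 1"
  shows "opnorm N (comm_defect N w A B)
    \<le> opnorm N (comm_defect N w X Y) + opnorm N (mdiff (mcomm N A B) (mcomm N X Y))"
proof -
  have "opnorm N (mdiff (comm_defect N w A B) (comm_defect N w X Y))
      \<le> cmod (- cnj w) * opnorm N (mdiff (mcomm N A B) (mcomm N X Y))"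
    by (rule opnorm_scale_le) (simp add: comm_defect_def mdiff_def mscale_def algebra_simps)
  then show ?thesis
    using assms opnorm_le_mdiff[of N "comm_defect N w A B" "comm_defect N w X Y"] by simp
qed

section \<open>Continuity of the logarithm along paths\<close>

definition mat_continuous :: "(real \<Rightarrow> cmat) \<Rightarrow> bool" where
  "mat_continuous F \<longleftrightarrow> (\<forall>i j. continuous_on UNIV (\<lambda>t. F t i j))"

lemma mat_continuous_mmul: "mat_continuous F \<Longrightarrow> mat_continuous G \<Longrightarrow> mat_continuous (\<lambda>t. mmul N (F t) (G t))"
  unfolding mat_continuous_def mmul_def by (auto intro!: continuous_intros)

lemma mat_continuous_madj: "mat_continuous F \<Longrightarrow> mat_continuous (\<lambda>t. madj (F t))"
  unfolding mat_continuous_def madj_def by (auto intro!: continuous_intros)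

lemma mat_continuous_mdiff: "mat_continuous F \<Longrightarrow> mat_continuous G \<Longrightarrow> mat_continuous (\<lambda>t. mdiff (F t) (G t))"
  unfolding mat_continuous_def mdiff_def by (auto intro!: continuous_intros)

lemma mat_continuous_mscale: "mat_continuous F \<Longrightarrow> mat_continuous (\<lambda>t. mscale s (F t))"
  unfolding mat_continuous_def mscale_def by (auto intro!: continuous_intros)

lemma mat_continuous_const: "mat_continuous (\<lambda>t. a)"
  unfolding mat_continuous_def by (auto intro!: continuous_intros)

lemma mat_continuous_mpow: "mat_continuous F \<Longrightarrow> mat_continuous (\<lambda>t. mpow N (F t) p)"
  by (induction p) (auto intro: mat_continuous_mmul mat_continuous_const)

lemma mat_continuous_comm_defect:
  "mat_continuous A \<Longrightarrow> mat_continuous B \<Longrightarrow> mat_continuous (\<lambda>t. comm_defect N w (A t) (B t))"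
  unfolding comm_defect_def mcomm_def
  by (intro mat_continuous_mdiff mat_continuous_const mat_continuous_mscale mat_continuous_mmul
      mat_continuous_madj)

lemma continuous_on_mtrace: "mat_continuous F \<Longrightarrow> continuous_on UNIV (\<lambda>t. mtrace N (F t))"
  unfolding mat_continuous_def mtrace_def by (auto intro!: continuous_intros)

definition mat_segment :: "cmat \<Rightarrow> cmat \<Rightarrow> real \<Rightarrow> cmat" where
  "mat_segment P Q t = (\<lambda>i j. (1 - of_real t) * P i j + of_real t * Q i j)"

lemma mat_continuous_mat_segment: "mat_continuous (mat_segment P Q)"
  unfolding mat_continuous_def mat_segment_def by (auto intro!: continuous_intros)

lemma mat_segment_0 [simp]: "mat_segment P Q 0 = P" and mat_segment_1 [simp]: "mat_segment P Q 1 = Q"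
  unfolding mat_segment_def by auto

lemma opnorm_mat_segment_mdiff_le:
  assumes t: "t \<in> {0..1}"
  shows "opnorm N (mdiff (mat_segment P Q t) Q) \<le> opnorm N (mdiff P Q)"
proof -
  have "opnorm N (mdiff (mat_segment P Q t) Q) \<le> cmod (complex_of_real (1 - t)) * opnorm N (mdiff P Q)"
    by (rule opnorm_scale_le) (simp add: mat_segment_def mdiff_def algebra_simps)
  also have "cmod (complex_of_real (1 - t)) = 1 - t" using t by (simp only: norm_of_real) simp
  also have "(1 - t) * opnorm N (mdiff P Q) \<le> 1 * opnorm N (mdiff P Q)"
    using t opnorm_nonneg[of N "mdiff P Q"] by (intro mult_right_mono) auto
  finally show ?thesis by simp
qed

lemma continuous_on_log_det:
  assumes F: "mat_continuous F" and bound: "\<And>t. t \<in> {0..1} \<Longrightarrow> opnorm N (F t) \<le> q" and q: "q < 1"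
  shows "continuous_on {0..1} (\<lambda>t. log_det N (F t))"
proof -
  have q0: "q \<ge> 0" using bound[of 0] opnorm_nonneg[of N "F 0"] by simp
  have "uniform_limit {0..1} (\<lambda>m t. \<Sum>p<m. log_det_term N (F t) p) (\<lambda>t. log_det N (F t)) sequentially"
    unfolding log_det_def
  proof (rule Weierstrass_m_test)
    show "\<And>p t. t \<in> {0..1} \<Longrightarrow> norm (log_det_term N (F t) p) \<le> real N * q ^ Suc p"
      by (rule norm_log_det_term_le) (rule bound)
    show "summable (\<lambda>p. real N * q ^ Suc p)" using q q0
      by (intro summable_mult summable_mult2) (simp add: summable_geometric)
  qed
  moreover have "continuous_on {0..1} (\<lambda>t. \<Sum>p<m. log_det_term N (F t) p)" for m
    unfolding log_det_term_def
    by (intro continuous_intros continuous_on_subset[OF continuous_on_mtrace[OF mat_continuous_mpow[OF F]]])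
      (auto simp del: of_nat_Suc)
  ultimately show ?thesis by (intro uniform_limit_theorem) auto
qed

lemma exp_Im_eq_if_exp_eq:
  assumes "exp z = c * of_real r" "r \<ge> 0" "cmod c = 1"
  shows "exp (\<i> * of_real (Im z)) = c"
proof -
  have "exp (Re z) = cmod (c * of_real r)" by (simp only: assms(1)[symmetric] norm_exp_eq_Re)
  then have "r = exp (Re z)" using assms(2,3) by (simp add: norm_mult)
  then have "of_real (exp (Re z)) * cis (Im z) = of_real (exp (Re z)) * c"
    using assms(1) by (simp only: exp_eq_polar mult.commute)
  then show ?thesis by (simp add: cis_conv_exp)
qed

lemma Im_log_det_path_constant:
  assumes F: "mat_continuous F" and bound: "\<And>t. t \<in> {0..1} \<Longrightarrow> opnorm N (F t) \<le> q" and q: "q < 1"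
    and phase: "\<And>t. t \<in> {0..1} \<Longrightarrow> \<exists>r\<ge>0. det (mat_of N (mdiff mone (F t))) = c * of_real r"
    and c: "cmod c = 1"
  shows "Im (log_det N (F 1)) = Im (log_det N (F 0))"
proof -
  define g where "g = (\<lambda>t. Im (log_det N (F t)))"
  have phase_g: "exp (\<i> * of_real (g t)) = c" if t: "t \<in> {0..1}" for t
  proof -
    obtain r where r: "r \<ge> 0" "det (mat_of N (mdiff mone (F t))) = c * of_real r" using phase[OF t] by blast
    have "opnorm N (F t) < 1" using bound[OF t] q by simp
    then have "exp (log_det N (F t)) = c * of_real r" using log_det_sums_exp_eq_det(2) r by simp
    then show ?thesis unfolding g_def using exp_Im_eq_if_exp_eq r(1) c by blast
  qed
  have period: "\<exists>m::int. g t = g 0 + 2 * pi * m" if "t \<in> {0..1}" for t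
  proof -
    have "exp (\<i> * of_real (g t)) = exp (\<i> * of_real (g 0))" using phase_g[OF that] phase_g[of 0] by simp
    then obtain m :: int where "\<i> * of_real (g t) = \<i> * of_real (g 0) + of_int (2 * m) * pi * \<i>"
      unfolding exp_eq by blast
    then show ?thesis by (auto simp: complex_eq_iff)
  qed
  define h where "h = (\<lambda>t. (g t - g 0) / (2 * pi))"
  have int: "h t \<in> \<int>" if t: "t \<in> {0..1}" for t
  proof -
    obtain m :: int where "g t = g 0 + 2 * pi * m" using period[OF t] by blast
    then show ?thesis by (simp add: h_def)
  qed
  have "continuous_on {0..1} h"
    unfolding h_def g_def by (intro continuous_intros continuous_on_log_det[OF F bound q]) auto
  then have "h constant_on {0..1}"
  proof (rule continuous_discrete_range_constant[OF connected_Icc])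
    fix x assume x: "x \<in> {0..1::real}"
    show "\<exists>e>0. \<forall>y. y \<in> {0..1} \<and> h y \<noteq> h x \<longrightarrow> e \<le> norm (h y - h x)"
    proof (intro exI[of _ 1] conjI allI impI)
      fix y assume y: "y \<in> {0..1} \<and> h y \<noteq> h x"
      then obtain a b :: int where "h y = of_int a" "h x = of_int b" using int x by (metis Ints_cases)
      with y show "1 \<le> norm (h y - h x)" by auto
    qed simp
  qed
  then have "h 1 = h 0" unfolding constant_on_def by fastforce
  then show ?thesis by (simp add: h_def g_def)
qed

lemma Im_log_det_comm_defect_eq_nearby:
  assumes w: "cmod w = 1" and X: "opnorm N X \<le> 2" and Y: "opnorm N Y \<le> 2"
    and D: "opnorm N (comm_defect N w X Y) \<le> 1/4"
    and X': "opnorm N (mdiff X' X) \<le> 1/1000" and Y': "opnorm N (mdiff Y' Y) \<le> 1/1000"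
  shows "Im (log_det N (comm_defect N w X' Y')) = Im (log_det N (comm_defect N w X Y))"
proof -
  define A where "A = mat_segment X' X"
  define B where "B = mat_segment Y' Y"
  \<comment> \<open>the constants keep the defect along the segments below \<open>1/4 + 108/1000 \<le> 1/2\<close>\<close>
  have bound: "opnorm N (comm_defect N w (A t) (B t)) \<le> 1/2" if t: "t \<in> {0..1}" for t
  proof -
    have dA: "opnorm N (mdiff (A t) X) \<le> 1/1000" and dB: "opnorm N (mdiff (B t) Y) \<le> 1/1000"
      using opnorm_mat_segment_mdiff_le[OF t, of N] X' Y' unfolding A_def B_def by (meson order_trans)+
    have "opnorm N (A t) \<le> 3" "opnorm N (B t) \<le> 3"
      using opnorm_le_mdiff[of N "A t" X] opnorm_le_mdiff[of N "B t" Y] dA dB X Y by linarith+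
    then have "opnorm N (mdiff (mcomm N (A t) (B t)) (mcomm N X Y)) \<le> 108 * (1/1000)"
      using X Y by (intro opnorm_mcomm_mdiff_le[OF dA dB]) auto
    then show ?thesis using opnorm_comm_defect_le_mdiff[OF w, of N "A t" "B t" X Y] D by simp
  qed
  have cont: "mat_continuous (\<lambda>t. comm_defect N w (A t) (B t))"
    unfolding A_def B_def by (intro mat_continuous_comm_defect mat_continuous_mat_segment)
  have "cmod (cnj w ^ N) = 1" using w by (simp add: norm_power)
  from Im_log_det_path_constant[OF cont bound _ det_one_minus_comm_defect this]
  have "Im (log_det N (comm_defect N w (A 1) (B 1))) = Im (log_det N (comm_defect N w (A 0) (B 0)))"
    by simp
  then show ?thesis unfolding A_def B_def by simp
qed

section \<open>The obstruction is a root of unity of order a power of n\<close>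

lemma eventually_opnorm_le_2_if_unitary:
  assumes "uhf_unitary n X"
  shows "\<forall>\<^sub>F k in sequentially. opnorm (n^k) (X k) \<le> 2"
proof -
  have "(\<lambda>k. opnorm (n^k) (mdiff (mmul (n^k) (madj (X k)) (X k)) mone)) \<longlonglongrightarrow> 0"
    using assms unfolding uhf_unitary_def uhf_eq_def uhf_mul_def uhf_adj_def uhf_one_def by auto
  then have "\<forall>\<^sub>F k in sequentially. opnorm (n^k) (mdiff (mmul (n^k) (madj (X k)) (X k)) mone) < 1"
    by (rule order_tendstoD) simp
  then show ?thesis by eventually_elim (auto intro: opnorm_le_2_if_almost_isometry)
qed

lemma comm_defect_tendsto_0:
  assumes rep: "proj_rep_lift n ut c"
  shows "(\<lambda>k. opnorm (n^k) (comm_defect (n^k) (ob_scalar c) (ut (1,0) k) (ut (0,1) k))) \<longlonglongrightarrow> 0"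
proof -
  define X where "X = ut (1,0)"
  define Y where "Y = ut (0,1)"
  define Z where "Z = ut (1,1)"
  define a where "a = c (1,0) (0,1)"
  define b where "b = c (0,1) (1,0)"
  have a: "cmod a = 1" and b: "cmod b = 1" and X: "uhf_unitary n X" and Y: "uhf_unitary n Y"
    using rep unfolding proj_rep_lift_def a_def b_def X_def Y_def by auto
  have rel: "uhf_eq n (uhf_mul n (ut g) (ut h)) (uhf_scale (c g h) (ut (z2add g h)))" for g h
    using rep unfolding proj_rep_lift_def by blast
  have XY: "(\<lambda>k. opnorm (n^k) (mdiff (mmul (n^k) (X k) (Y k)) (mscale a (Z k)))) \<longlonglongrightarrow> 0"
    and YX: "(\<lambda>k. opnorm (n^k) (mdiff (mmul (n^k) (Y k) (X k)) (mscale b (Z k)))) \<longlonglongrightarrow> 0"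
    using rel[of "(1,0)" "(0,1)"] rel[of "(0,1)" "(1,0)"]
    unfolding uhf_eq_def uhf_mul_def uhf_scale_def X_def Y_def Z_def a_def b_def by (simp_all add: z2add_def)
  have XX: "(\<lambda>k. opnorm (n^k) (mdiff (mmul (n^k) (X k) (madj (X k))) mone)) \<longlonglongrightarrow> 0"
    and YY: "(\<lambda>k. opnorm (n^k) (mdiff (mmul (n^k) (Y k) (madj (Y k))) mone)) \<longlonglongrightarrow> 0"
    using X Y unfolding uhf_unitary_def uhf_eq_def uhf_mul_def uhf_adj_def uhf_one_def by auto
  define bound where "bound = (\<lambda>k.
      4 * (opnorm (n^k) (mdiff (mmul (n^k) (X k) (Y k)) (mscale a (Z k)))
           + opnorm (n^k) (mdiff (mmul (n^k) (Y k) (X k)) (mscale b (Z k))))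
    + 4 * opnorm (n^k) (mdiff (mmul (n^k) (X k) (madj (X k))) mone)
    + opnorm (n^k) (mdiff (mmul (n^k) (Y k) (madj (Y k))) mone))"
  have "bound \<longlonglongrightarrow> 4 * (0 + 0) + 4 * 0 + 0"
    unfolding bound_def by (intro tendsto_intros XY YX XX YY)
  then have lim: "bound \<longlonglongrightarrow> 0" by simp
  have w: "cmod (a * cnj b) = 1" using a b by (simp add: norm_mult)
  have "\<forall>\<^sub>F k in sequentially.
      opnorm (n^k) (comm_defect (n^k) (ob_scalar c) (X k) (Y k)) \<le> bound k"
    using eventually_opnorm_le_2_if_unitary[OF X] eventually_opnorm_le_2_if_unitary[OF Y]
  proof eventually_elim
    case (elim k)
    have "opnorm (n^k) (comm_defect (n^k) (a * cnj b) (X k) (Y k))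
      \<le> 4 * opnorm (n^k) (mdiff (mmul (n^k) (X k) (Y k)) (mscale (a * cnj b) (mmul (n^k) (Y k) (X k))))
        + 4 * opnorm (n^k) (mdiff (mmul (n^k) (X k) (madj (X k))) mone)
        + opnorm (n^k) (mdiff (mmul (n^k) (Y k) (madj (Y k))) mone)"
      by (rule opnorm_comm_defect_le[OF w elim])
    moreover have "ob_scalar c = a * cnj b" unfolding ob_scalar_def a_def b_def ..
    ultimately show ?case
      using opnorm_twisted_commutator_le[OF a b, of "n^k" "X k" "Y k" "Z k"]
      unfolding bound_def by (simp add: algebra_simps)
  qed
  then show ?thesis
    unfolding X_def Y_def by (rule tendsto_sandwich[OF always_eventually[OF allI[OF opnorm_nonneg]] _ tendsto_const lim])
qed

lemma Im_log_det_comm_defect_amp: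
  assumes n: "n \<ge> 1" and w: "cmod w = 1" and jk: "j \<le> k"
    and Xk: "opnorm (n^k) Xk \<le> 2" and Yk: "opnorm (n^k) Yk \<le> 2"
    and Dk: "opnorm (n^k) (comm_defect (n^k) w Xk Yk) \<le> 1/4"
    and Dj: "opnorm (n^j) (comm_defect (n^j) w Xj Yj) < 1"
    and X: "opnorm (n^k) (mdiff Xk (amp n j k Xj)) \<le> 1/1000"
    and Y: "opnorm (n^k) (mdiff Yk (amp n j k Yj)) \<le> 1/1000"
  shows "Im (log_det (n^k) (comm_defect (n^k) w Xk Yk))
    = real (n^(k-j)) * Im (log_det (n^j) (comm_defect (n^j) w Xj Yj))"
proof -
  have "Im (log_det (n^k) (comm_defect (n^k) w Xk Yk))
      = Im (log_det (n^k) (comm_defect (n^k) w (amp n j k Xj) (amp n j k Yj)))"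
    using X Y by (intro Im_log_det_comm_defect_eq_nearby[OF w Xk Yk Dk, symmetric])
      (simp_all add: opnorm_mdiff_commute)
  also have "log_det (n^k) (comm_defect (n^k) w (amp n j k Xj) (amp n j k Yj))
      = of_nat (n^(k-j)) * log_det (n^j) (comm_defect (n^j) w Xj Yj)"
    unfolding log_det_block_cong[OF amp_comm_defect[OF n jk]] by (rule log_det_amp[OF n jk Dj])
  finally show ?thesis by simp
qed

lemma abs_Im_log_det_comm_defect_le:
  assumes n: "n \<ge> 1" and w: "cmod w = 1" and jk: "j \<le> k"
    and Xk: "opnorm (n^k) Xk \<le> 2" and Yk: "opnorm (n^k) Yk \<le> 2"
    and Dk: "opnorm (n^k) (comm_defect (n^k) w Xk Yk) \<le> 1/4"
    and Dj: "opnorm (n^j) (comm_defect (n^j) w Xj Yj) < 1"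
    and X: "opnorm (n^k) (mdiff Xk (amp n j k Xj)) \<le> 1/1000"
    and Y: "opnorm (n^k) (mdiff Yk (amp n j k Yj)) \<le> 1/1000"
  shows "\<bar>Im (log_det (n^j) (comm_defect (n^j) w Xj Yj))\<bar>
    \<le> 2 * real (n^j) * opnorm (n^k) (comm_defect (n^k) w Xk Yk)"
proof -
  have "real (n^(k-j)) * \<bar>Im (log_det (n^j) (comm_defect (n^j) w Xj Yj))\<bar>
      = \<bar>Im (log_det (n^k) (comm_defect (n^k) w Xk Yk))\<bar>"
    unfolding Im_log_det_comm_defect_amp[OF assms] by (simp add: abs_mult)
  also have "\<dots> \<le> cmod (log_det (n^k) (comm_defect (n^k) w Xk Yk))" by (rule abs_Im_le_cmod)
  also have "\<dots> \<le> 2 * real (n^k) * opnorm (n^k) (comm_defect (n^k) w Xk Yk)"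
    using Dk by (intro norm_log_det_le) simp_all
  also have "\<dots> = real (n^(k-j)) * (2 * real (n^j) * opnorm (n^k) (comm_defect (n^k) w Xk Yk))"
    using power_split_le[OF jk, of n] by simp
  finally show ?thesis using n by simp
qed

lemma power_eq_1_if_Im_log_det_comm_defect_eq_0:
  assumes w: "cmod w = 1" and D: "opnorm N (comm_defect N w A B) < 1"
    and Im: "Im (log_det N (comm_defect N w A B)) = 0"
  shows "w ^ N = 1"
proof -
  obtain r where r: "r \<ge> 0" "det (mat_of N (mdiff mone (comm_defect N w A B))) = cnj w ^ N * of_real r"
    using det_one_minus_comm_defect by blast
  then have "exp (log_det N (comm_defect N w A B)) = cnj w ^ N * of_real r"
    using log_det_sums_exp_eq_det(2)[OF D] by simp
  then have "exp (\<i> * of_real (Im (log_det N (comm_defect N w A B)))) = cnj w ^ N"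
    by (rule exp_Im_eq_if_exp_eq) (use r w in \<open>simp_all add: norm_power\<close>)
  then have "cnj (w ^ N) = 1" using Im by simp
  then show ?thesis by (metis complex_cnj_cnj complex_cnj_one)
qed

lemma obstruction_is_root_of_unity:
  assumes n: "n \<ge> 1" and rep: "proj_rep_lift n ut c"
  shows "\<exists>l. ob_scalar c ^ (n ^ l) = 1"
proof -
  define \<omega> where "\<omega> = ob_scalar c"
  define X where "X = ut (1,0)"
  define Y where "Y = ut (0,1)"
  define e where "e = (\<lambda>k. opnorm (n^k) (comm_defect (n^k) \<omega> (X k) (Y k)))"
  have w: "cmod \<omega> = 1" using rep unfolding proj_rep_lift_def \<omega>_def ob_scalar_def by (simp add: norm_mult)
  have e: "e \<longlonglongrightarrow> 0"
    unfolding e_def \<omega>_def X_def Y_def by (rule comm_defect_tendsto_0[OF rep])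
  have X: "uhf_unitary n X" and Y: "uhf_unitary n Y"
    using rep unfolding proj_rep_lift_def X_def Y_def by auto
  have "\<forall>\<^sub>F k in sequentially. e k < 1/4" using e by (rule order_tendstoD) simp
  then have "\<forall>\<^sub>F k in sequentially. opnorm (n^k) (X k) \<le> 2 \<and> opnorm (n^k) (Y k) \<le> 2 \<and> e k \<le> 1/4"
    using eventually_opnorm_le_2_if_unitary[OF X] eventually_opnorm_le_2_if_unitary[OF Y]
    by eventually_elim simp
  then obtain K1 where K1: "\<And>k. k \<ge> K1 \<Longrightarrow>
      opnorm (n^k) (X k) \<le> 2 \<and> opnorm (n^k) (Y k) \<le> 2 \<and> e k \<le> 1/4"
    unfolding eventually_sequentially by blast
  obtain K2 where
    K2: "\<And>j k. j \<ge> K2 \<Longrightarrow> k \<ge> j \<Longrightarrow> opnorm (n^k) (mdiff (X k) (amp n j k (X j))) < 1/1000"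
    using X unfolding uhf_unitary_def uhf_elem_def by (elim conjE allE[of _ "1/1000"]) auto
  obtain K3 where
    K3: "\<And>j k. j \<ge> K3 \<Longrightarrow> k \<ge> j \<Longrightarrow> opnorm (n^k) (mdiff (Y k) (amp n j k (Y j))) < 1/1000"
    using Y unfolding uhf_unitary_def uhf_elem_def by (elim conjE allE[of _ "1/1000"]) auto
  define j where "j = max K1 (max K2 K3)"
  define Lj where "Lj = log_det (n^j) (comm_defect (n^j) \<omega> (X j) (Y j))"
  have jK: "j \<ge> K1" "j \<ge> K2" "j \<ge> K3" by (simp_all add: j_def)
  have ej: "e j < 1" using K1[OF jK(1)] by simp
  have "\<bar>Im Lj\<bar> \<le> 2 * real (n^j) * e k" if k: "k \<ge> j" for k
  proof -
    have "opnorm (n^k) (X k) \<le> 2" "opnorm (n^k) (Y k) \<le> 2" "e k \<le> 1/4"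
      using K1[of k] k jK(1) by auto
    then show ?thesis
      unfolding Lj_def e_def using K2[OF jK(2) k] K3[OF jK(3) k] ej
      by (intro abs_Im_log_det_comm_defect_le[OF n w k]) (auto simp: e_def)
  qed
  then have "\<bar>Im Lj\<bar> \<le> 2 * real (n^j) * 0"
    by (intro tendsto_le[OF _ tendsto_mult[OF tendsto_const e] tendsto_const])
      (auto simp: eventually_sequentially)
  then have "\<omega> ^ (n^j) = 1"
    using ej unfolding e_def Lj_def by (intro power_eq_1_if_Im_log_det_comm_defect_eq_0[OF w]) auto
  then show ?thesis unfolding \<omega>_def by blast
qed

section \<open>Projective representations from clock and shift matrices\<close>

lemma uhf_eq_if_eventually_block_eq:
  assumes "\<And>k. k \<ge> l \<Longrightarrow> block_eq (n^k) (x k) (y k)"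
  shows "uhf_eq n x y"
  unfolding uhf_eq_def
proof (rule tendsto_eventually)
  show "\<forall>\<^sub>F k in sequentially. opnorm (n ^ k) (mdiff (x k) (y k)) = 0"
    unfolding eventually_sequentially
    using assms by (intro exI[of _ l] allI impI opnorm_zero) (auto simp: block_eq_def mdiff_def)
qed

lemma uhf_elem_amp: "n \<ge> 1 \<Longrightarrow> uhf_elem n (\<lambda>k. amp n l k A)"
  unfolding uhf_elem_def by (auto simp: amp_amp intro!: exI[of _ l])

lemma uhf_eq_uhf_mul_amp:
  assumes n: "n \<ge> 1" and AB: "block_eq (n^l) (mmul (n^l) A B) C"
  shows "uhf_eq n (uhf_mul n (\<lambda>k. amp n l k A) (\<lambda>k. amp n l k B)) (\<lambda>k. amp n l k C)"
proof (rule uhf_eq_if_eventually_block_eq)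
  fix k assume k: "k \<ge> l"
  have "block_eq (n^k) (mmul (n^k) (amp n l k A) (amp n l k B)) (amp n l k (mmul (n^l) A B))"
    by (rule amp_mmul[OF n k])
  also have "block_eq (n^k) \<dots> (amp n l k C)" by (rule amp_block_cong[OF n k AB])
  finally show "block_eq (n^k) (uhf_mul n (\<lambda>k. amp n l k A) (\<lambda>k. amp n l k B) k) (amp n l k C)"
    unfolding uhf_mul_def .
qed

lemma proj_rep_lift_amp:
  assumes n: "n \<ge> 1" and c: "\<And>g h. cmod (c g h) = 1"
    and unitary: "\<And>g. block_eq (n^l) (mmul (n^l) (madj (U g)) (U g)) mone"
                 "\<And>g. block_eq (n^l) (mmul (n^l) (U g) (madj (U g))) mone"
    and mult: "\<And>g h. block_eq (n^l) (mmul (n^l) (U g) (U h)) (mscale (c g h) (U (z2add g h)))"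
  shows "proj_rep_lift n (\<lambda>g k. amp n l k (U g)) c"
proof -
  have "uhf_unitary n (\<lambda>k. amp n l k (U g))" for g
    using uhf_eq_uhf_mul_amp[OF n unitary(1)] uhf_eq_uhf_mul_amp[OF n unitary(2)] uhf_elem_amp[OF n]
    unfolding uhf_unitary_def uhf_adj_def uhf_one_def amp_madj amp_mone[OF n] by simp
  moreover have "uhf_eq n (uhf_mul n (\<lambda>k. amp n l k (U g)) (\<lambda>k. amp n l k (U h)))
      (uhf_scale (c g h) (\<lambda>k. amp n l k (U (z2add g h))))" for g h
    using uhf_eq_uhf_mul_amp[OF n mult] unfolding uhf_scale_def amp_mscale .
  ultimately show ?thesis unfolding proj_rep_lift_def using c by blast
qed

lemma power_int_eq_if_dvd_diff:
  fixes w :: "'a::field"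
  assumes "w ^ L = 1" and "int L dvd (a - b)"
  shows "w powi a = w powi b"
proof (cases "L = 0")
  case False
  then have "w \<noteq> 0" using assms(1) by (metis power_0_left zero_neq_one)
  obtain t where "a - b = int L * t" using assms(2) by (elim dvdE)
  then have "a = b + int L * t" by simp
  then show ?thesis using \<open>w \<noteq> 0\<close> assms(1) by (simp add: power_int_add power_int_mult)
qed (use assms(2) in simp)

lemma eq_mod_iff_dvd_diff: "0 \<le> x \<Longrightarrow> x < int L \<Longrightarrow> (x = y mod int L) \<longleftrightarrow> int L dvd (x - y)"
  by (metis mod_eq_dvd_iff mod_pos_pos_trivial)

lemma sum_if_eq_mod:
  assumes "L > 0"
  shows "(\<Sum>s<L. if int s = t mod int L then f s else 0) = f (nat (t mod int L))"
proof -
  have "(\<Sum>s<L. if int s = t mod int L then f s else 0) = (\<Sum>s<L. if s = nat (t mod int L) then f s else 0)"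
    using assms by (intro sum.cong) auto
  also have "\<dots> = f (nat (t mod int L))" using assms by (simp add: nat_less_iff)
  finally show ?thesis .
qed

text \<open>\<open>clock_shift w L (p, q)\<close> is \<open>C\<^sup>p S\<^sup>q\<close> for the clock \<open>C = diag (w\<^sup>i)\<close> and the cyclic shift
  \<open>S e\<^sub>j = e\<^sub>j\<^sub>+\<^sub>1\<close> of \<open>\<complex>\<^sup>L\<close>; the relation \<open>S C = w\<^sup>-\<^sup>1 C S\<close> yields the cocycle.\<close>

definition clock_shift :: "complex \<Rightarrow> nat \<Rightarrow> z2 \<Rightarrow> cmat" where
  "clock_shift w L g = (\<lambda>i j. if int i = (int j + snd g) mod int L then w powi (int i * fst g) else 0)"

definition clock_shift_cocycle :: "complex \<Rightarrow> z2 \<Rightarrow> z2 \<Rightarrow> complex" where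
  "clock_shift_cocycle w g h = w powi (- snd g * fst h)"

lemma clock_shift_mult:
  assumes w: "w ^ L = 1" and L: "L > 0"
  shows "block_eq L (mmul L (clock_shift w L g) (clock_shift w L h))
    (mscale (clock_shift_cocycle w g h) (clock_shift w L (z2add g h)))"
  unfolding block_eq_def
proof (intro allI impI)
  fix i j assume i: "i < L" and j: "j < L"
  obtain p q p' q' where g: "g = (p,q)" and h: "h = (p',q')" by (cases g, cases h)
  define s where "s = nat ((int j + q') mod int L)"
  have s: "int s = (int j + q') mod int L" unfolding s_def using L by simp
  have ds: "int L dvd (int s - (int j + q'))" unfolding s by (simp add: mod_eq_dvd_iff[symmetric])
  have "mmul L (clock_shift w L g) (clock_shift w L h) i j
      = (\<Sum>r<L. if int r = (int j + q') mod int L then clock_shift w L g i r * w powi (int r * p') else 0)"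
    unfolding mmul_def h clock_shift_def[of w L "(p', q')"] by (intro sum.cong refl) auto
  also have "\<dots> = clock_shift w L g i s * w powi (int s * p')"
    unfolding s_def by (rule sum_if_eq_mod[OF L])
  also have "\<dots> = mscale (clock_shift_cocycle w g h) (clock_shift w L (z2add g h)) i j"
  proof -
    have "int L dvd (int i - (int s + q)) \<longleftrightarrow> int L dvd (int i - (int j + (q + q')))"
      using ds dvd_add_left_iff[OF ds, of "int i - (int s + q)"] by (simp add: algebra_simps)
    moreover have "w powi (int i * p) * w powi (int s * p') = w powi (- q * p') * w powi (int i * (p + p'))"
      if "int L dvd (int i - (int s + q))"
    proof -
      have "w \<noteq> 0" using w L by (metis power_0_left zero_neq_one neq0_conv)
      moreover have "w powi (int i * p + int s * p') = w powi (- q * p' + int i * (p + p'))"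
      proof (rule power_int_eq_if_dvd_diff[OF w])
        have "int i * p + int s * p' - (- q * p' + int i * (p + p')) = (int s + q - int i) * p'"
          by (simp add: algebra_simps)
        then show "int L dvd (int i * p + int s * p' - (- q * p' + int i * (p + p')))"
          using dvd_mult2[OF dvd_diff_commute[THEN iffD1, OF that]] by simp
      qed
      ultimately show ?thesis by (metis power_int_add)
    qed
    ultimately show ?thesis
      using eq_mod_iff_dvd_diff[of "int i" L] i
      unfolding clock_shift_def mscale_def clock_shift_cocycle_def g h z2add_def by auto
  qed
  finally show "mmul L (clock_shift w L g) (clock_shift w L h) i j
      = mscale (clock_shift_cocycle w g h) (clock_shift w L (z2add g h)) i j" .
qed

lemma clock_shift_zero: "L > 0 \<Longrightarrow> block_eq L (clock_shift w L (0, 0)) mone"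
  unfolding block_eq_def clock_shift_def mone_def by auto

lemma madj_clock_shift:
  assumes w: "cmod w = 1" "w ^ L = 1" and L: "L > 0"
  shows "block_eq L (madj (clock_shift w L (p, q))) (mscale (w powi - (p * q)) (clock_shift w L (- p, - q)))"
  unfolding block_eq_def
proof (intro allI impI)
  fix i j assume i: "i < L" and j: "j < L"
  have w0: "w \<noteq> 0" using w by auto
  have cnj_w: "cnj (w powi x) = w powi - x" for x
    by (simp add: cnj_unimodular[OF w(1)] power_int_minus power_int_inverse)
  define D where "D \<longleftrightarrow> int L dvd (int j - (int i + q))"
  have C1: "int j = (int i + q) mod int L \<longleftrightarrow> D"
    unfolding D_def using j by (intro eq_mod_iff_dvd_diff) auto
  have "int i - (int j - q) = - (int j - (int i + q))" by simp
  then have "int L dvd (int i - (int j - q)) \<longleftrightarrow> D" unfolding D_def by (metis dvd_minus_iff)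
  then have C2: "int i = (int j + - q) mod int L \<longleftrightarrow> D"
    using eq_mod_iff_dvd_diff[of "int i" L "int j + - q"] i by simp
  have E: "w powi - (int j * p) = w powi - (p * q) * w powi (int i * - p)" if "D"
  proof -
    have "w powi - (int j * p) = w powi (- (p * q) + int i * - p)"
      by (rule power_int_eq_if_dvd_diff[OF w(2)])
        (use dvd_mult2[OF that[unfolded D_def], of "- p"] in \<open>simp add: algebra_simps\<close>)
    also have "\<dots> = w powi - (p * q) * w powi (int i * - p)" by (rule power_int_add) (simp add: w0)
    finally show ?thesis .
  qed
  show "madj (clock_shift w L (p, q)) i j = mscale (w powi - (p * q)) (clock_shift w L (- p, - q)) i j"
    unfolding madj_def mscale_def clock_shift_def fst_conv snd_conv C1 C2
    using E by (cases D) (simp_all only: if_True if_False cnj_w complex_cnj_zero mult_zero_right)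
qed

lemma mmul_mscale_right: "mmul N a (mscale s b) = mscale s (mmul N a b)"
  unfolding mmul_def mscale_def by (simp add: sum_distrib_left mult.left_commute)

lemma clock_shift_unitary:
  assumes w: "cmod w = 1" "w ^ L = 1" and L: "L > 0"
  shows "block_eq L (mmul L (madj (clock_shift w L g)) (clock_shift w L g)) mone"
    and "block_eq L (mmul L (clock_shift w L g) (madj (clock_shift w L g))) mone"
proof -
  obtain p q where g: "g = (p, q)" by (cases g)
  define s where "s = w powi - (p * q)"
  have w0: "w \<noteq> 0" using w by auto
  have inverse_pair: "block_eq L (mscale s (mmul L (clock_shift w L g1) (clock_shift w L g2))) mone"
    if "z2add g1 g2 = (0, 0)" "s * clock_shift_cocycle w g1 g2 = 1" for g1 g2
  proof -
    have "block_eq L (mscale s (mmul L (clock_shift w L g1) (clock_shift w L g2)))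
        (mscale s (mscale (clock_shift_cocycle w g1 g2) (clock_shift w L (0, 0))))"
      using mscale_block_cong[OF clock_shift_mult[OF w(2) L, of g1 g2]] that(1) by simp
    also have "block_eq L \<dots> (mscale s (mscale (clock_shift_cocycle w g1 g2) mone))"
      by (intro mscale_block_cong clock_shift_zero L)
    also have "\<dots> = mone" using that(2) by (simp add: mscale_def mult.assoc[symmetric])
    finally show ?thesis .
  qed
  have "s * clock_shift_cocycle w (- p, - q) (p, q) = 1" "s * clock_shift_cocycle w (p, q) (- p, - q) = 1"
    unfolding s_def clock_shift_cocycle_def using w0 by (simp_all add: power_int_minus mult.commute)
  moreover have "z2add (- p, - q) (p, q) = (0, 0)" "z2add (p, q) (- p, - q) = (0, 0)"
    by (simp_all add: z2add_def)
  ultimately have inv: "block_eq L (mscale s (mmul L (clock_shift w L (- p, - q)) (clock_shift w L (p, q)))) mone"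
    "block_eq L (mscale s (mmul L (clock_shift w L (p, q)) (clock_shift w L (- p, - q)))) mone"
    by (simp_all add: inverse_pair)
  have "block_eq L (mmul L (madj (clock_shift w L (p, q))) (clock_shift w L (p, q)))
      (mscale s (mmul L (clock_shift w L (- p, - q)) (clock_shift w L (p, q))))"
    using mmul_block_cong[OF madj_clock_shift[OF w L] block_eq_refl] unfolding s_def mmul_mscale_left .
  from block_eq_trans[OF this inv(1)]
  show "block_eq L (mmul L (madj (clock_shift w L g)) (clock_shift w L g)) mone" unfolding g .
  have "block_eq L (mmul L (clock_shift w L (p, q)) (madj (clock_shift w L (p, q))))
      (mscale s (mmul L (clock_shift w L (p, q)) (clock_shift w L (- p, - q))))"
    using mmul_block_cong[OF block_eq_refl madj_clock_shift[OF w L]] unfolding s_def mmul_mscale_right .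
  from block_eq_trans[OF this inv(2)]
  show "block_eq L (mmul L (clock_shift w L g) (madj (clock_shift w L g))) mone" unfolding g .
qed

lemma ob_scalar_clock_shift_cocycle: "cmod w = 1 \<Longrightarrow> ob_scalar (clock_shift_cocycle w) = w"
  unfolding ob_scalar_def clock_shift_cocycle_def by (simp add: cnj_unimodular power_int_minus)

lemma root_of_unity_is_obstruction:
  assumes n: "n \<ge> 1" and w: "cmod \<omega> = 1" "\<omega> ^ (n ^ l) = 1"
  shows "\<exists>ut c. proj_rep_lift n ut c \<and> ob_scalar c = \<omega>"
proof -
  have "proj_rep_lift n (\<lambda>g k. amp n l k (clock_shift \<omega> (n^l) g)) (clock_shift_cocycle \<omega>)"
    using n w clock_shift_unitary[OF w] clock_shift_mult[OF w(2)]
    by (intro proj_rep_lift_amp) (simp_all add: clock_shift_cocycle_def norm_power_int)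
  then show ?thesis using ob_scalar_clock_shift_cocycle[OF w(1)] by blast
qed

theorem mainTheorem5:
  fixes n :: nat and \<omega> :: complex
  assumes "n \<ge> 1" and "cmod \<omega> = 1"
  shows "(\<exists>ut c. proj_rep_lift n ut c \<and> ob_scalar c = \<omega>) \<longleftrightarrow> (\<exists>l::nat. \<omega> ^ (n ^ l) = 1)"
  using obstruction_is_root_of_unity[OF assms(1)] root_of_unity_is_obstruction[OF assms] by blast

end
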